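(* Assume the standing assumptions, suppose $(D)$ has an optimal solution $p^*$ (a minimizer of $\theta$) with $\|p^*\|\le R$ for some $R>0$, assume $D_f>0$, let $\epsilon>0$, $\rho=\frac{\epsilon}{3D_f}$, $\kappa=\frac{2\epsilon}{3R^2}$, and let $(p_k)_{k\ge0}$ be generated by the fast gradient method applied to $\theta_{\rho,\kappa}$. Then for all $k\ge0$, $$\|\nabla\theta_\rho(p_k)\|=\|Ax_{f,p_k}-x_{g,p_k}\|\le 2\sqrt{L(\rho,\kappa)\Bigl(\theta(0)-\theta(p^* )+\frac\epsilon3\Bigr)}\,e^{-\frac k2\sqrt{\kappa/L(\rho,\kappa)}}+\frac{4\sqrt2\,\epsilon}{3R}.$$
   Context: Standing assumptions: $\mathcal{H}$ is a real Hilbert space; $f:\mathcal{H}\to\mathbb{R}\cup\{+\infty\}$ is proper, convex, lower semicontinuous with bounded effective domain; $g:\mathbb{R}^m\to\mathbb{R}\cup\{+\infty\}$ is proper, lower semicontinuous and $\mu$-strongly convex for some $\mu>0$; $A:\mathcal{H}\to\mathbb{R}^m$ is linear and continuous with $A(\operatorname{dom} f)\cap\operatorname{dom} g\neq\emptyset$. $(D)$ is $\sup_{p}\{-f^*(A^*p)-g^*(-p)\}$. $D_f:=\sup\{\tfrac12\|x\|^2:x\in\operatorname{dom} f\}$. $\theta(p):=f^*(A^*p)+g^*(-p)$. For $\rho>0$, $f_\rho^*(q):=\sup_{x\in\mathcal{H}}\{\langle q,x\rangle-f(x)-\frac\rho2\|x\|^2\}$; $x_{f,p}$ is the unique maximizer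 in the definition of $f_\rho^*(A^*p)$; $x_{g,p}:=\nabla g^*(-p)$, the unique minimizer of $x\mapsto\langle p,x\rangle+g(x)$ on $\mathbb{R}^m$. $\theta_\rho(p):=f_\rho^*(A^*p)+g^*(-p)$, whose gradient is $Ax_{f,p}-x_{g,p}$; $\theta_{\rho,\kappa}(p):=\theta_\rho(p)+\frac\kappa2\|p\|^2$; $L(\rho,\kappa):=\frac{\|A\|^2}{\rho}+\frac1\mu+\kappa$. The fast gradient method applied to $\theta_{\rho,\kappa}$ is: $w_0=p_0=0$ and for $k\ge0$, $p_{k+1}=w_k-\frac{1}{L(\rho,\kappa)}\nabla\theta_{\rho,\kappa}(w_k)$, $w_{k+1}=p_{k+1}+\frac{\sqrt{L(\rho,\kappa)}-\sqrt\kappa}{\sqrt{L(\rho,\kappa)}+\sqrt\kappa}(p_{k+1}-p_k)$. *)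

theory Defs
  imports "HOL-Analysis.Analysis"
begin

text \<open>Extended-real-valued functions: values in real \<union> {+\<infinity>} are modelled as ereal.\<close>

definition proper_fun :: "('a \<Rightarrow> ereal) \<Rightarrow> bool" where
  "proper_fun f \<longleftrightarrow> (\<forall>x. f x \<noteq> -\<infinity>) \<and> (\<exists>x. f x \<noteq> \<infinity>)"

definition edom :: "('a \<Rightarrow> ereal) \<Rightarrow> 'a set" where
  "edom f = {x. f x < \<infinity>}"

definition convex_fun :: "('a::real_vector \<Rightarrow> ereal) \<Rightarrow> bool" where
  "convex_fun f \<longleftrightarrow> (\<forall>x y. \<forall>t\<in>{0<..<1::real}.
      f (t *\<^sub>R x + (1 - t) *\<^sub>R y) \<le> ereal t * f x + ereal (1 - t) * f y)"

definition strongly_convex_fun :: "real \<Rightarrow> ('a::real_normed_vector \<Rightarrow> ereal) \<Rightarrow> bool" where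
  "strongly_convex_fun \<mu> f \<longleftrightarrow> (\<forall>x y. \<forall>t\<in>{0<..<1::real}.
      f (t *\<^sub>R x + (1 - t) *\<^sub>R y) \<le> ereal t * f x + ereal (1 - t) * f y
          - ereal (\<mu> / 2 * t * (1 - t) * (norm (x - y))\<^sup>2))"

definition lsc_fun :: "('a::topological_space \<Rightarrow> ereal) \<Rightarrow> bool" where
  "lsc_fun f \<longleftrightarrow> (\<forall>c. closed {x. f x \<le> ereal c})"

definition fconj :: "('a::real_inner \<Rightarrow> ereal) \<Rightarrow> 'a \<Rightarrow> ereal" where
  "fconj f q = (SUP x. ereal (inner q x) - f x)"

definition fconj_reg :: "real \<Rightarrow> ('a::real_inner \<Rightarrow> ereal) \<Rightarrow> 'a \<Rightarrow> ereal" where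
  "fconj_reg \<rho> f q = (SUP x. ereal (inner q x - \<rho> / 2 * (norm x)\<^sup>2) - f x)"

definition xf :: "real \<Rightarrow> ('a::real_inner \<Rightarrow> ereal) \<Rightarrow> ('m \<Rightarrow> 'a) \<Rightarrow> 'm \<Rightarrow> 'a" where
  "xf \<rho> f Astar p = (THE x. \<forall>y.
      ereal (inner (Astar p) y - \<rho> / 2 * (norm y)\<^sup>2) - f y
        \<le> ereal (inner (Astar p) x - \<rho> / 2 * (norm x)\<^sup>2) - f x)"

definition xg :: "('b::real_inner \<Rightarrow> ereal) \<Rightarrow> 'b \<Rightarrow> 'b" where
  "xg g p = (THE x. \<forall>y. ereal (inner p x) + g x \<le> ereal (inner p y) + g y)"

definition Dconst :: "('a::real_normed_vector \<Rightarrow> ereal) \<Rightarrow> real" where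
  "Dconst f = Sup ((\<lambda>x. (norm x)\<^sup>2 / 2) ` edom f)"

definition theta :: "('a::real_inner \<Rightarrow> ereal) \<Rightarrow> ('b::real_inner \<Rightarrow> ereal) \<Rightarrow> ('b \<Rightarrow> 'a) \<Rightarrow> 'b \<Rightarrow> ereal" where
  "theta f g Astar p = fconj f (Astar p) + fconj g (- p)"

definition Lconst :: "real \<Rightarrow> real \<Rightarrow> real \<Rightarrow> real \<Rightarrow> real" where
  "Lconst nA \<mu> \<rho> \<kappa> = nA\<^sup>2 / \<rho> + 1 / \<mu> + \<kappa>"

end

theory Submission
  imports Defs
begin

(* The estimate is a statement about the fast gradient method (FGM) applied to the regularized
   smoothed dual theta_reg + kappa/2 |.|^2, where theta_reg p = f_rho^*(A^* p) + g^*(-p).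
   1. Existence theory for extended-real functions: a proper, lower semicontinuous, strongly
      convex function on a Hilbert space has an affine minorant (by projecting onto its closed
      convex epigraph), hence is bounded below, hence attains its minimum (minimizing sequences
      are Cauchy); at the minimizer it grows quadratically.
   2. Consequently x_{f,p} and x_{g,p} are well defined, the conjugates are attained there, and
      theta_reg is convex and smooth with gradient A x_{f,p} - x_{g,p} and Lipschitz constant
      (onorm A)^2/rho + 1/mu; moreover theta_reg \<le> theta \<le> theta_reg + rho D_f.
   3. Real-valued smooth optimization: descent lemma, co-coercivity, and the Lyapunov-function
      proof of the linear rate of FGM for kappa-strongly convex, L-smooth functions.
   4. An abstract gradient estimate combining 3 with the approximation property of 2; the main
      theorem instantiates it with rho = eps/(3 D_f) and kappa = 2 eps/(3 R^2). *)

text \<open>Strong convexity of an extended-real function with modulus c, required only between points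
  of finite value; unlike strongly_convex_fun it is stable under adding finite quadratics.\<close>

definition strongly_convex_dom :: "real \<Rightarrow> ('a::real_normed_vector \<Rightarrow> ereal) \<Rightarrow> bool" where
  "strongly_convex_dom c F \<longleftrightarrow> (\<forall>x. F x \<noteq> -\<infinity>) \<and>
    (\<forall>x y (t::real). F x \<noteq> \<infinity> \<longrightarrow> F y \<noteq> \<infinity> \<longrightarrow> 0 < t \<longrightarrow> t < 1 \<longrightarrow>
      F (t *\<^sub>R x + (1 - t) *\<^sub>R y) \<le> ereal (t * real_of_ereal (F x) + (1 - t) * real_of_ereal (F y)
        - c / 2 * t * (1 - t) * (norm (x - y))\<^sup>2))"

lemma strongly_convex_domD:
  assumes "strongly_convex_dom c F" "F x = ereal a" "F y = ereal b" "0 < t" "t < 1"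
  shows "F (t *\<^sub>R x + (1 - t) *\<^sub>R y) \<le> ereal (t * a + (1 - t) * b - c / 2 * t * (1 - t) * (norm (x - y))\<^sup>2)"
proof -
  have "F x \<noteq> \<infinity>" "F y \<noteq> \<infinity>" using assms(2,3) by simp_all
  then show ?thesis using assms unfolding strongly_convex_dom_def by (metis real_of_ereal.simps(1))
qed

lemma strongly_convex_dom_not_MInf: "strongly_convex_dom c F \<Longrightarrow> F x \<noteq> -\<infinity>"
  unfolding strongly_convex_dom_def by simp

lemma convex_fun_iff_strongly_convex_fun_0: "convex_fun f \<longleftrightarrow> strongly_convex_fun 0 f"
  unfolding convex_fun_def strongly_convex_fun_def by (simp add: zero_ereal_def[symmetric])

lemma strongly_convex_fun_imp_dom:
  assumes sc: "strongly_convex_fun c f" and proper: "proper_fun f"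
  shows "strongly_convex_dom c f"
  unfolding strongly_convex_dom_def
proof (intro conjI allI impI)
  fix x show "f x \<noteq> -\<infinity>" using proper unfolding proper_fun_def by simp
next
  fix x y and t :: real assume fx: "f x \<noteq> \<infinity>" and fy: "f y \<noteq> \<infinity>" and t: "0 < t" "t < 1"
  obtain a b where ab: "f x = ereal a" "f y = ereal b"
    using fx fy proper unfolding proper_fun_def by (metis ereal_cases)
  have "f (t *\<^sub>R x + (1 - t) *\<^sub>R y)
      \<le> ereal t * f x + ereal (1 - t) * f y - ereal (c / 2 * t * (1 - t) * (norm (x - y))\<^sup>2)"
    using sc t unfolding strongly_convex_fun_def by auto
  then show "f (t *\<^sub>R x + (1 - t) *\<^sub>R y) \<le> ereal (t * real_of_ereal (f x) + (1 - t) * real_of_ereal (f y)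
      - c / 2 * t * (1 - t) * (norm (x - y))\<^sup>2)"
    using ab by simp
qed

lemma norm_convex_combination_sq:
  fixes x y :: "'a::real_inner"
  shows "(norm (t *\<^sub>R x + (1 - t) *\<^sub>R y))\<^sup>2
    = t * (norm x)\<^sup>2 + (1 - t) * (norm y)\<^sup>2 - t * (1 - t) * (norm (x - y))\<^sup>2"
  unfolding power2_norm_eq_inner by (simp add: inner_diff inner_add algebra_simps)

lemma strongly_convex_dom_add_quadratic:
  fixes F :: "'a::real_inner \<Rightarrow> ereal"
  assumes sc: "strongly_convex_dom c F"
  shows "strongly_convex_dom (c + r) (\<lambda>x. F x + ereal (r / 2 * (norm x)\<^sup>2 + inner q x))"
  unfolding strongly_convex_dom_def
proof (intro conjI allI impI)
  fix x show "F x + ereal (r / 2 * (norm x)\<^sup>2 + inner q x) \<noteq> -\<infinity>"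
    using strongly_convex_dom_not_MInf[OF sc] by simp
next
  fix x y and t :: real
  assume fx: "F x + ereal (r / 2 * (norm x)\<^sup>2 + inner q x) \<noteq> \<infinity>"
    and fy: "F y + ereal (r / 2 * (norm y)\<^sup>2 + inner q y) \<noteq> \<infinity>" and t: "0 < t" "t < 1"
  obtain a b where ab: "F x = ereal a" "F y = ereal b"
    using fx fy strongly_convex_dom_not_MInf[OF sc] by (metis ereal_cases plus_ereal.simps(2))
  define Q where "Q z = r / 2 * (norm z)\<^sup>2 + inner q z" for z
  have "F (t *\<^sub>R x + (1 - t) *\<^sub>R y) + ereal (Q (t *\<^sub>R x + (1 - t) *\<^sub>R y))
      \<le> ereal (t * a + (1 - t) * b - c / 2 * t * (1 - t) * (norm (x - y))\<^sup>2)
        + ereal (t * Q x + (1 - t) * Q y - r / 2 * t * (1 - t) * (norm (x - y))\<^sup>2)"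
  proof (rule add_mono)
    show "ereal (Q (t *\<^sub>R x + (1 - t) *\<^sub>R y))
        \<le> ereal (t * Q x + (1 - t) * Q y - r / 2 * t * (1 - t) * (norm (x - y))\<^sup>2)"
      unfolding Q_def
      by (simp only: norm_convex_combination_sq inner_add_right inner_scaleR_right)
        (simp add: field_simps)
  qed (rule strongly_convex_domD[OF sc ab t])
  also have "\<dots> = ereal (t * real_of_ereal (F x + ereal (Q x)) + (1 - t) * real_of_ereal (F y + ereal (Q y))
      - (c + r) / 2 * t * (1 - t) * (norm (x - y))\<^sup>2)"
    using ab by (simp add: field_simps)
  finally show "F (t *\<^sub>R x + (1 - t) *\<^sub>R y) + ereal (r / 2 * (norm (t *\<^sub>R x + (1 - t) *\<^sub>R y))\<^sup>2
      + inner q (t *\<^sub>R x + (1 - t) *\<^sub>R y))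
    \<le> ereal (t * real_of_ereal (F x + ereal (r / 2 * (norm x)\<^sup>2 + inner q x))
      + (1 - t) * real_of_ereal (F y + ereal (r / 2 * (norm y)\<^sup>2 + inner q y))
      - (c + r) / 2 * t * (1 - t) * (norm (x - y))\<^sup>2)"
    unfolding Q_def .
qed

lemma lsc_fun_sequentially:
  fixes F :: "'a::real_normed_vector \<Rightarrow> ereal"
  assumes "lsc_fun F" "X \<longlonglongrightarrow> x" "\<And>n. F (X n) \<le> ereal (c n)" "c \<longlonglongrightarrow> c0"
  shows "F x \<le> ereal c0"
proof -
  have le: "F x \<le> ereal (c0 + e)" if e: "e > 0" for e
  proof -
    have "eventually (\<lambda>n. c n < c0 + e) sequentially"
      using assms(4) e by (simp add: order_tendstoD(2))
    then have ev: "eventually (\<lambda>n. X n \<in> {x. F x \<le> ereal (c0 + e)}) sequentially"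
    proof (rule eventually_mono)
      fix n assume "c n < c0 + e"
      then show "X n \<in> {x. F x \<le> ereal (c0 + e)}" using assms(3)[of n] order_trans by fastforce
    qed
    have "closed {x. F x \<le> ereal (c0 + e)}" using assms(1) unfolding lsc_fun_def by blast
    from Lim_in_closed_set[OF this ev _ assms(2)] show ?thesis by simp
  qed
  show ?thesis
  proof (cases "F x")
    case (real r)
    have "r \<le> c0" by (rule field_le_epsilon) (use le real in simp)
    then show ?thesis using real by simp
  qed (use le[of 1] in simp_all)
qed

lemma lsc_fun_add_continuous:
  fixes F :: "'a::real_normed_vector \<Rightarrow> ereal"
  assumes lsc: "lsc_fun F" and cont: "continuous_on UNIV \<phi>" and finite_below: "\<And>x. F x \<noteq> -\<infinity>"
  shows "lsc_fun (\<lambda>x. F x + ereal (\<phi> x))"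
  unfolding lsc_fun_def closed_sequential_limits
proof (intro allI impI, elim conjE)
  fix c :: real and X x
  assume X: "\<forall>n. X n \<in> {x. F x + ereal (\<phi> x) \<le> ereal c}" and lim: "X \<longlonglongrightarrow> x"
  have "(\<lambda>n. \<phi> (X n)) \<longlonglongrightarrow> \<phi> x"
    using cont lim by (simp add: continuous_on_eq_continuous_at isCont_tendsto_compose)
  then have lim_bound: "(\<lambda>n. c - \<phi> (X n)) \<longlonglongrightarrow> c - \<phi> x" by (intro tendsto_intros)
  have bound: "F (X n) \<le> ereal (c - \<phi> (X n))" for n
  proof -
    have "F (X n) + ereal (\<phi> (X n)) \<le> ereal c" using X by auto
    then show ?thesis using finite_below[of "X n"] by (cases "F (X n)") auto
  qed
  have "F x \<le> ereal (c - \<phi> x)" by (rule lsc_fun_sequentially[OF lsc lim bound lim_bound])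
  then show "x \<in> {x. F x + ereal (\<phi> x) \<le> ereal c}" using finite_below[of x] by (cases "F x") auto
qed

lemma le_0_if_le_small_multiples:
  fixes u v :: real
  assumes "\<And>t. 0 < t \<Longrightarrow> t < 1 \<Longrightarrow> u \<le> t * v"
  shows "u \<le> 0"
proof (rule ccontr)
  assume "\<not> u \<le> 0"
  then have u: "u > 0" by simp
  have "u \<le> 1/2 * v" using assms[of "1/2"] by simp
  then have v: "v > 0" using u by simp
  define t where "t = min (1/2) (u / (2 * v))"
  have t: "0 < t" "t < 1" using u v by (auto simp: t_def)
  have "t * v \<le> u / (2 * v) * v" unfolding t_def by (intro mult_right_mono) (use v in auto)
  also have "\<dots> = u / 2" using v by simp
  finally show False using assms[OF t] u by simp
qed

text \<open>Two points whose values are within d and e of a lower bound m are at squared distance at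
  most 4/c (d + e): evaluate F at their midpoint.\<close>

lemma strongly_convex_dom_near_minimizers_close:
  assumes sc: "strongly_convex_dom c F" and c: "c > 0" and lower: "\<And>z. ereal m \<le> F z"
    and x: "F x \<le> ereal (m + d)" and y: "F y \<le> ereal (m + e)"
  shows "(norm (x - y))\<^sup>2 \<le> 4 / c * (d + e)"
proof -
  obtain a b where ab: "F x = ereal a" "F y = ereal b"
    using x y strongly_convex_dom_not_MInf[OF sc, of x] strongly_convex_dom_not_MInf[OF sc, of y]
    by (cases "F x"; cases "F y") auto
  have "ereal m \<le> F ((1/2) *\<^sub>R x + (1 - 1/2) *\<^sub>R y)" by (rule lower)
  also have "\<dots> \<le> ereal ((1/2) * a + (1 - 1/2) * b - c/2 * (1/2) * (1 - 1/2) * (norm (x - y))\<^sup>2)"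
    by (rule strongly_convex_domD[OF sc ab]) auto
  finally have "c * (norm (x - y))\<^sup>2 \<le> 4 * (d + e)" using x y ab by simp
  then show ?thesis using c by (simp add: pos_le_divide_eq mult.commute)
qed

lemma strongly_convex_dom_minimizing_sequence_Cauchy:
  assumes sc: "strongly_convex_dom c F" and c: "c > 0" and lower: "\<And>z. ereal m \<le> F z"
    and X: "\<And>n. F (X n) \<le> ereal (m + 1 / (real n + 1))"
  shows "Cauchy X"
  unfolding Cauchy_def
proof (intro allI impI)
  fix e :: real assume e: "e > 0"
  obtain M :: nat where M: "8 / (c * e\<^sup>2) < real M" using reals_Archimedean2 by blast
  have small: "4 / c * (2 / (real M + 1)) < e\<^sup>2"
  proof -
    have "8 < e\<^sup>2 * (c * real M)" using M c e by (simp add: pos_divide_less_eq mult_ac)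
    also have "\<dots> \<le> e\<^sup>2 * (c * (real M + 1))" using c by (intro mult_left_mono) auto
    finally show ?thesis using c by (simp add: pos_divide_less_eq)
  qed
  have "dist (X n) (X k) < e" if nk: "n \<ge> M" "k \<ge> M" for n k
  proof -
    have "1 / (real n + 1) \<le> 1 / (real M + 1)" "1 / (real k + 1) \<le> 1 / (real M + 1)"
      using nk by (simp_all add: frac_le)
    then have "1 / (real n + 1) + 1 / (real k + 1) \<le> 2 / (real M + 1)" by simp
    then have "(norm (X n - X k))\<^sup>2 \<le> 4 / c * (2 / (real M + 1))"
      using strongly_convex_dom_near_minimizers_close[OF sc c lower X X, of n k] c
      by (meson divide_nonneg_pos mult_left_mono order_trans zero_le_numeral less_imp_le)
    then have "(norm (X n - X k))\<^sup>2 < e\<^sup>2" using small by linarith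
    then show ?thesis using e by (simp add: dist_norm power_less_imp_less_base)
  qed
  then show "\<exists>M. \<forall>m\<ge>M. \<forall>n\<ge>M. dist (X m) (X n) < e" by blast
qed

lemma strongly_convex_dom_has_min_if_bounded_below:
  fixes F :: "'a::{real_normed_vector,complete_space} \<Rightarrow> ereal"
  assumes sc: "strongly_convex_dom c F" and c: "c > 0" and lsc: "lsc_fun F"
    and x0: "F x0 \<noteq> \<infinity>" and bounded_below: "\<And>x. ereal b \<le> F x"
  shows "\<exists>x. F x \<noteq> \<infinity> \<and> (\<forall>y. F x \<le> F y)"
proof -
  have not_MInf: "\<And>x. F x \<noteq> -\<infinity>" using strongly_convex_dom_not_MInf[OF sc] .
  define S where "S = {real_of_ereal (F x) | x. F x \<noteq> \<infinity>}"
  have S_ne: "S \<noteq> {}" using x0 by (auto simp: S_def)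
  have finite_value: "F x = ereal (real_of_ereal (F x))" if "F x \<noteq> \<infinity>" for x
    using that not_MInf[of x] by (cases "F x") auto
  have "b \<le> s" if "s \<in> S" for s
  proof -
    obtain x where "s = real_of_ereal (F x)" "F x \<noteq> \<infinity>" using \<open>s \<in> S\<close> by (auto simp: S_def)
    then show ?thesis using bounded_below[of x] finite_value[of x] by (metis ereal_less_eq(3))
  qed
  then have bdd: "bdd_below S" by (rule bdd_belowI)
  define m where "m = Inf S"
  have lower: "ereal m \<le> F x" for x
  proof (cases "F x = \<infinity>")
    case False
    then have "m \<le> real_of_ereal (F x)" unfolding m_def by (intro cInf_lower[OF _ bdd]) (auto simp: S_def)
    then show ?thesis using finite_value[OF False] by (metis ereal_less_eq(3))
  qed simp
  have "\<exists>x. F x \<le> ereal (m + 1 / (real n + 1))" for n :: nat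
  proof -
    have "Inf S < m + 1 / (real n + 1)" unfolding m_def by (simp add: add_pos_pos)
    then obtain s where "s \<in> S" "s < m + 1 / (real n + 1)" using cInf_lessD[OF S_ne] by blast
    then obtain x where "real_of_ereal (F x) < m + 1 / (real n + 1)" "F x \<noteq> \<infinity>"
      by (auto simp: S_def)
    then show ?thesis using finite_value[of x] by (metis ereal_less_eq(3) less_eq_real_def)
  qed
  then obtain X where X: "\<And>n. F (X n) \<le> ereal (m + 1 / (real n + 1))" by metis
  have "Cauchy X" by (rule strongly_convex_dom_minimizing_sequence_Cauchy[OF sc c lower X])
  then obtain x where lim: "X \<longlonglongrightarrow> x" using Cauchy_convergent_iff convergent_def by blast
  have "F x \<le> ereal m"
  proof (rule lsc_fun_sequentially[OF lsc lim X])
    show "(\<lambda>n. m + 1 / (real n + 1)) \<longlonglongrightarrow> m"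
      using tendsto_add[OF tendsto_const LIMSEQ_inverse_real_of_nat] by (simp add: inverse_eq_divide add.commute)
  qed
  then have "F x \<noteq> \<infinity> \<and> (\<forall>y. F x \<le> F y)" using lower order_trans by fastforce
  then show ?thesis ..
qed

lemma strongly_convex_dom_quadratic_growth:
  fixes F :: "'a::real_normed_vector \<Rightarrow> ereal"
  assumes sc: "strongly_convex_dom c F" and a: "F x0 = ereal a" and min: "\<And>y. F x0 \<le> F y"
  shows "ereal (a + c / 2 * (norm (y - x0))\<^sup>2) \<le> F y"
proof (cases "F y")
  case (real b)
  have "a + c / 2 * (norm (y - x0))\<^sup>2 - b \<le> 0"
  proof (rule le_0_if_le_small_multiples)
    fix t :: real assume t: "0 < t" "t < 1"
    have "F x0 \<le> F (t *\<^sub>R y + (1 - t) *\<^sub>R x0)" by (rule min)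
    also have "\<dots> \<le> ereal (t * b + (1 - t) * a - c / 2 * t * (1 - t) * (norm (y - x0))\<^sup>2)"
      by (rule strongly_convex_domD[OF sc real a t])
    finally have "t * (a + c / 2 * (norm (y - x0))\<^sup>2 - b) \<le> t * (t * (c / 2 * (norm (y - x0))\<^sup>2))"
      using a by (simp add: field_simps)
    then show "a + c / 2 * (norm (y - x0))\<^sup>2 - b \<le> t * (c / 2 * (norm (y - x0))\<^sup>2)" using t by simp
  qed
  then show ?thesis using real by simp
next
  case MInf then show ?thesis using strongly_convex_dom_not_MInf[OF sc] by simp
qed simp

text \<open>Projection onto a nonempty closed convex subset of a Hilbert space, characterized by the
  variational inequality (the distance function squared is strongly convex).\<close>

lemma closed_convex_has_projection:
  fixes C :: "'b::{real_inner,complete_space} set"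
  assumes closed: "closed C" and convex: "convex C" and nonempty: "w0 \<in> C"
  shows "\<exists>y\<in>C. \<forall>w\<in>C. inner (z - y) (w - y) \<le> 0"
proof -
  define F where "F x = (if x \<in> C then ereal ((norm (z - x))\<^sup>2) else \<infinity>)" for x
  have sc: "strongly_convex_dom 2 F" unfolding strongly_convex_dom_def
  proof (intro conjI allI impI)
    fix x show "F x \<noteq> -\<infinity>" by (simp add: F_def)
  next
    fix x y and t :: real assume fx: "F x \<noteq> \<infinity>" and fy: "F y \<noteq> \<infinity>" and t: "0 < t" "t < 1"
    have xy: "x \<in> C" "y \<in> C" using fx fy by (auto simp: F_def split: if_splits)
    have mid: "t *\<^sub>R x + (1 - t) *\<^sub>R y \<in> C" using convexD[OF convex xy, of t "1 - t"] t by simp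
    have "z - (t *\<^sub>R x + (1 - t) *\<^sub>R y) = t *\<^sub>R (z - x) + (1 - t) *\<^sub>R (z - y)" by (simp add: algebra_simps)
    then have "(norm (z - (t *\<^sub>R x + (1 - t) *\<^sub>R y)))\<^sup>2
        = t * (norm (z - x))\<^sup>2 + (1 - t) * (norm (z - y))\<^sup>2 - t * (1 - t) * (norm (x - y))\<^sup>2"
      using norm_convex_combination_sq[of t "z - x" "z - y"] by (simp add: norm_minus_commute)
    then show "F (t *\<^sub>R x + (1 - t) *\<^sub>R y) \<le> ereal (t * real_of_ereal (F x) + (1 - t) * real_of_ereal (F y)
        - 2 / 2 * t * (1 - t) * (norm (x - y))\<^sup>2)"
      using xy mid by (simp add: F_def)
  qed
  have "lsc_fun F" unfolding lsc_fun_def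
  proof
    fix c :: real
    have "{x. F x \<le> ereal c} = C \<inter> {x. (norm (z - x))\<^sup>2 \<le> c}" by (auto simp: F_def)
    moreover have "closed {x. (norm (z - x))\<^sup>2 \<le> c}" by (intro closed_Collect_le continuous_intros)
    ultimately show "closed {x. F x \<le> ereal c}" using closed by auto
  qed
  then obtain y where y: "F y \<noteq> \<infinity>" "\<And>w. F y \<le> F w"
    using strongly_convex_dom_has_min_if_bounded_below[OF sc _ _ _, of w0 0] nonempty
    by (force simp: F_def)
  have yC: "y \<in> C" using y(1) by (auto simp: F_def split: if_splits)
  have "dist z y \<le> dist z w" if "w \<in> C" for w
  proof -
    have "(norm (z - y))\<^sup>2 \<le> (norm (z - w))\<^sup>2" using y(2)[of w] yC that by (simp add: F_def)
    then show ?thesis by (simp add: dist_norm power2_le_iff_abs_le)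
  qed
  then show ?thesis using any_closest_point_dot[OF convex closed yC] yC by blast
qed

lemma epigraph_closed:
  fixes F :: "'a::real_normed_vector \<Rightarrow> ereal"
  assumes lsc: "lsc_fun F"
  shows "closed {(x, t). F x \<le> ereal t}"
  unfolding closed_sequential_limits
proof (intro allI impI, elim conjE)
  fix Z and l :: "'a \<times> real" assume Z: "\<forall>n. Z n \<in> {(x, t). F x \<le> ereal t}" and lim: "Z \<longlonglongrightarrow> l"
  have bound: "F (fst (Z n)) \<le> ereal (snd (Z n))" for n
    using Z[rule_format, of n] by (simp add: case_prod_beta)
  have lim_fst: "(\<lambda>n. fst (Z n)) \<longlonglongrightarrow> fst l" and lim_snd: "(\<lambda>n. snd (Z n)) \<longlonglongrightarrow> snd l"
    using lim by (auto intro: tendsto_fst tendsto_snd)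
  have "F (fst l) \<le> ereal (snd l)" by (rule lsc_fun_sequentially[OF lsc lim_fst _ lim_snd]) (rule bound)
  then show "l \<in> {(x, t). F x \<le> ereal t}" by (cases l) auto
qed

lemma epigraph_convex:
  fixes F :: "'a::real_normed_vector \<Rightarrow> ereal"
  assumes sc: "strongly_convex_dom c F" and c: "c \<ge> 0"
  shows "convex {(x, t). F x \<le> ereal t}"
  unfolding convex_def
proof (intro ballI allI impI)
  fix p1 p2 :: "'a \<times> real" and u v :: real
  assume p: "p1 \<in> {(x, t). F x \<le> ereal t}" "p2 \<in> {(x, t). F x \<le> ereal t}"
    and uv: "0 \<le> u" "0 \<le> v" "u + v = 1"
  obtain x s y r where pp: "p1 = (x, s)" "p2 = (y, r)" by (cases p1, cases p2)
  have xs: "F x \<le> ereal s" and yr: "F y \<le> ereal r" using p pp by auto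
  show "u *\<^sub>R p1 + v *\<^sub>R p2 \<in> {(x, t). F x \<le> ereal t}"
  proof (cases "u = 0 \<or> v = 0")
    case True then show ?thesis using uv p by auto
  next
    case False
    then have t: "0 < u" "u < 1" and v: "v = 1 - u" using uv by auto
    obtain a b where ab: "F x = ereal a" "F y = ereal b"
      using xs yr strongly_convex_dom_not_MInf[OF sc, of x] strongly_convex_dom_not_MInf[OF sc, of y]
      by (cases "F x"; cases "F y") auto
    have "a \<le> s" "b \<le> r" using xs yr ab by auto
    have "F (u *\<^sub>R x + (1 - u) *\<^sub>R y) \<le> ereal (u * a + (1 - u) * b - c / 2 * u * (1 - u) * (norm (x - y))\<^sup>2)"
      by (rule strongly_convex_domD[OF sc ab t])
    also have "\<dots> \<le> ereal (u * s + (1 - u) * r)"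
    proof -
      have "u * a \<le> u * s" "(1 - u) * b \<le> (1 - u) * r"
        using \<open>a \<le> s\<close> \<open>b \<le> r\<close> t by (auto intro: mult_left_mono)
      moreover have "0 \<le> c / 2 * u * (1 - u) * (norm (x - y))\<^sup>2" using c t by simp
      ultimately show ?thesis by simp
    qed
    finally show ?thesis using pp v by simp
  qed
qed

text \<open>Separating a point strictly below the epigraph from it (by projecting onto the closed
  convex epigraph) yields a non-vertical supporting hyperplane, i.e. an affine minorant.\<close>

lemma strongly_convex_dom_affine_minorant:
  fixes F :: "'a::{real_inner,complete_space} \<Rightarrow> ereal"
  assumes sc: "strongly_convex_dom c F" and c: "c \<ge> 0" and lsc: "lsc_fun F" and x0: "F x0 = ereal f0"
  shows "\<exists>u a. \<forall>x. ereal (a + inner u x) \<le> F x"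
proof -
  define E where "E = {(x, t). F x \<le> ereal t}"
  have "(x0, f0) \<in> E" using x0 by (simp add: E_def)
  then obtain y \<tau> where y_E: "(y, \<tau>) \<in> E"
    and proj: "\<And>w. w \<in> E \<Longrightarrow> inner ((x0, f0 - 1) - (y, \<tau>)) (w - (y, \<tau>)) \<le> 0"
    using closed_convex_has_projection[OF epigraph_closed[OF lsc] epigraph_convex[OF sc c], of "(x0, f0)" "(x0, f0 - 1)"]
    unfolding E_def by fastforce
  define s where "s = f0 - 1 - \<tau>"
  have ineq: "inner (x0 - y) (x - y) + s * (t - \<tau>) \<le> 0" if "F x \<le> ereal t" for x t
    using proj[of "(x, t)"] that by (simp add: E_def s_def)
  have "s \<le> 0" using ineq[of y "\<tau> + 1"] y_E by (simp add: E_def order_trans)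
  moreover have "s \<noteq> 0"
  proof
    assume s0: "s = 0"
    have "inner (x0 - y) (x0 - y) \<le> 0" using ineq[of x0 f0] x0 s0 by simp
    then have "x0 - y = 0" by (metis inner_eq_zero_iff inner_ge_zero order_antisym)
    then have "x0 = y" by simp
    then show False using y_E x0 s0 by (simp add: s_def E_def)
  qed
  ultimately have s_neg: "s < 0" by simp
  have "ereal ((\<tau> - inner (x0 - y) y / (- s)) + inner ((1 / (- s)) *\<^sub>R (x0 - y)) x) \<le> F x" for x
  proof (cases "F x")
    case (real r)
    have "inner (x0 - y) (x - y) \<le> (r - \<tau>) * (- s)" using ineq[of x r] real by (simp add: algebra_simps)
    then have "inner (x0 - y) (x - y) / (- s) \<le> r - \<tau>" using pos_divide_le_eq[of "- s"] s_neg by simp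
    then show ?thesis using real by (simp add: inner_diff_right diff_divide_distrib)
  qed (use strongly_convex_dom_not_MInf[OF sc] in auto)
  then show ?thesis by blast
qed

text \<open>With an affine minorant and strong convexity, the function is bounded below.\<close>

lemma strongly_convex_dom_bounded_below:
  fixes F :: "'a::{real_inner,complete_space} \<Rightarrow> ereal"
  assumes sc: "strongly_convex_dom c F" and c: "c > 0" and lsc: "lsc_fun F" and x0: "F x0 = ereal f0"
  shows "\<exists>b. \<forall>x. ereal b \<le> F x"
proof -
  obtain u a where affine: "\<And>x. ereal (a + inner u x) \<le> F x"
    using strongly_convex_dom_affine_minorant[OF sc _ lsc x0] c by fastforce
  define B where "B = 2 * a + 2 * inner u x0 - f0 - (norm u)\<^sup>2 / c"
  have "ereal B \<le> F x" for x
  proof (cases "F x")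
    case (real r)
    define d where "d = norm (x - x0)"
    define mid where "mid = (1/2) *\<^sub>R x + (1 - 1/2) *\<^sub>R x0"
    have "ereal (a + inner u mid) \<le> F mid" by (rule affine)
    also have "\<dots> \<le> ereal ((1/2) * r + (1 - 1/2) * f0 - c/2 * (1/2) * (1 - 1/2) * d\<^sup>2)"
      unfolding mid_def d_def by (rule strongly_convex_domD[OF sc real x0]) auto
    finally have "a + inner u mid \<le> (1/2) * r + (1/2) * f0 - c/8 * d\<^sup>2" by simp
    moreover have "inner u mid = inner u x0 + inner u (x - x0) / 2"
      unfolding mid_def by (simp add: inner_add_right inner_diff_right field_simps)
    moreover have "- (norm u * d) \<le> inner u (x - x0)"
      unfolding d_def using Cauchy_Schwarz_ineq2[of u "x - x0"] by linarith
    moreover have "norm u * d \<le> c/4 * d\<^sup>2 + (norm u)\<^sup>2 / c"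
    proof -
      have "0 \<le> (c * d / 2 - norm u)\<^sup>2" by simp
      then have "c * (norm u * d) \<le> c * (c/4 * d\<^sup>2 + (norm u)\<^sup>2 / c)"
        using c by (simp add: power2_eq_square algebra_simps)
      then show ?thesis using c by simp
    qed
    ultimately have "B \<le> r" unfolding B_def by argo
    then show ?thesis using real by simp
  qed (use strongly_convex_dom_not_MInf[OF sc] in auto)
  then show ?thesis by blast
qed

lemma strongly_convex_dom_has_min:
  fixes F :: "'a::{real_inner,complete_space} \<Rightarrow> ereal"
  assumes sc: "strongly_convex_dom c F" and c: "c > 0" and lsc: "lsc_fun F" and x0: "F x0 = ereal f0"
  shows "\<exists>x. F x \<noteq> \<infinity> \<and> (\<forall>y. F x \<le> F y)"
  using strongly_convex_dom_bounded_below[OF assms] x0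
    strongly_convex_dom_has_min_if_bounded_below[OF sc c lsc] by fastforce

lemma strongly_convex_dom_argmin_growth:
  fixes F :: "'a::{real_inner,complete_space} \<Rightarrow> ereal"
  assumes sc: "strongly_convex_dom c F" and c: "c > 0" and lsc: "lsc_fun F" and x0: "F x0 = ereal f0"
  shows "\<exists>x a. F x = ereal a \<and> (\<forall>y. ereal (a + c / 2 * (norm (y - x))\<^sup>2) \<le> F y)"
proof -
  obtain x where x: "F x \<noteq> \<infinity>" "\<forall>y. F x \<le> F y"
    using strongly_convex_dom_has_min[OF sc c lsc x0] by blast
  then obtain a where a: "F x = ereal a" using strongly_convex_dom_not_MInf[OF sc, of x] by (cases "F x") auto
  show ?thesis using strongly_convex_dom_quadratic_growth[OF sc a] x(2) a by blast
qed

lemma xf_characterization: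
  fixes f :: "'a::{real_inner,complete_space} \<Rightarrow> ereal" and Astar :: "'m \<Rightarrow> 'a"
    and \<rho> :: real and p :: 'm
  defines "x \<equiv> xf \<rho> f Astar p"
  assumes rho: "\<rho> > 0" and proper: "proper_fun f" and convex: "convex_fun f" and lsc: "lsc_fun f"
  shows "\<exists>fx. f x = ereal fx \<and> (\<forall>y b. f y = ereal b \<longrightarrow>
    fx + \<rho> / 2 * (norm x)\<^sup>2 - inner (Astar p) x + \<rho> / 2 * (norm (y - x))\<^sup>2
      \<le> b + \<rho> / 2 * (norm y)\<^sup>2 - inner (Astar p) y)"
proof -
  define q where "q = Astar p"
  define H where "H y = f y + ereal (\<rho> / 2 * (norm y)\<^sup>2 + inner (- q) y)" for y
  have not_MInf: "\<And>y. f y \<noteq> -\<infinity>" using proper unfolding proper_fun_def by auto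
  have sc: "strongly_convex_dom \<rho> H"
    using strongly_convex_dom_add_quadratic[OF strongly_convex_fun_imp_dom[OF _ proper], of 0 \<rho> "- q"]
      convex unfolding H_def convex_fun_iff_strongly_convex_fun_0 by simp
  have "lsc_fun H" unfolding H_def by (rule lsc_fun_add_continuous[OF lsc _ not_MInf]) (intro continuous_intros)
  moreover obtain y0 a0 where "f y0 = ereal a0"
    using proper unfolding proper_fun_def by (metis ereal_cases)
  ultimately obtain x' a where x': "H x' = ereal a" "\<And>y. ereal (a + \<rho> / 2 * (norm (y - x'))\<^sup>2) \<le> H y"
    using strongly_convex_dom_argmin_growth[OF sc rho, of y0] by (auto simp: H_def)
  obtain fx where fx: "f x' = ereal fx" using x'(1) not_MInf[of x'] by (cases "f x'") (auto simp: H_def)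
  have growth: "fx + \<rho> / 2 * (norm x')\<^sup>2 - inner q x' + \<rho> / 2 * (norm (y - x'))\<^sup>2
      \<le> b + \<rho> / 2 * (norm y)\<^sup>2 - inner q y" if "f y = ereal b" for y b
    using x'(2)[of y] x'(1) fx that by (simp add: H_def)
  have "x = x'" unfolding x_def xf_def q_def[symmetric]
  proof (rule the_equality)
    show "\<forall>y. ereal (inner q y - \<rho> / 2 * (norm y)\<^sup>2) - f y \<le> ereal (inner q x' - \<rho> / 2 * (norm x')\<^sup>2) - f x'"
    proof
      fix y show "ereal (inner q y - \<rho> / 2 * (norm y)\<^sup>2) - f y \<le> ereal (inner q x' - \<rho> / 2 * (norm x')\<^sup>2) - f x'"
      proof (cases "f y")
        case (real b)
        have "0 \<le> \<rho> / 2 * (norm (y - x'))\<^sup>2" using rho by simp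
        then show ?thesis using growth[OF real] real fx by simp
      qed (use not_MInf in auto)
    qed
  next
    fix z assume "\<forall>y. ereal (inner q y - \<rho> / 2 * (norm y)\<^sup>2) - f y \<le> ereal (inner q z - \<rho> / 2 * (norm z)\<^sup>2) - f z"
    then have "ereal (inner q x' - \<rho> / 2 * (norm x')\<^sup>2) - f x' \<le> ereal (inner q z - \<rho> / 2 * (norm z)\<^sup>2) - f z"
      by blast
    then obtain b where b: "f z = ereal b" "inner q x' - \<rho> / 2 * (norm x')\<^sup>2 - fx \<le> inner q z - \<rho> / 2 * (norm z)\<^sup>2 - b"
      using fx not_MInf[of z] by (cases "f z") auto
    have "\<rho> / 2 * (norm (z - x'))\<^sup>2 \<le> 0" using growth[OF b(1)] b(2) by simp
    then have "(norm (z - x'))\<^sup>2 \<le> 0" using rho by (simp add: mult_le_0_iff)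
    then show "z = x'" by simp
  qed
  then show ?thesis using fx growth unfolding q_def by blast
qed

lemma xg_characterization:
  fixes g :: "'b::{real_inner,complete_space} \<Rightarrow> ereal" and p :: 'b
  defines "x \<equiv> xg g p"
  assumes mu: "\<mu> > 0" and proper: "proper_fun g" and sc_g: "strongly_convex_fun \<mu> g" and lsc: "lsc_fun g"
  shows "\<exists>gx. g x = ereal gx \<and>
    (\<forall>y b. g y = ereal b \<longrightarrow> inner p x + gx + \<mu> / 2 * (norm (y - x))\<^sup>2 \<le> inner p y + b)"
proof -
  define H where "H y = g y + ereal (0 / 2 * (norm y)\<^sup>2 + inner p y)" for y
  have not_MInf: "\<And>y. g y \<noteq> -\<infinity>" using proper unfolding proper_fun_def by auto
  have sc: "strongly_convex_dom \<mu> H"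
    using strongly_convex_dom_add_quadratic[OF strongly_convex_fun_imp_dom[OF sc_g proper], of 0 p]
    unfolding H_def by simp
  have "lsc_fun H" unfolding H_def by (rule lsc_fun_add_continuous[OF lsc _ not_MInf]) (intro continuous_intros)
  moreover obtain y0 a0 where "g y0 = ereal a0"
    using proper unfolding proper_fun_def by (metis ereal_cases)
  ultimately obtain x' a where x': "H x' = ereal a" "\<And>y. ereal (a + \<mu> / 2 * (norm (y - x'))\<^sup>2) \<le> H y"
    using strongly_convex_dom_argmin_growth[OF sc mu, of y0] by (auto simp: H_def)
  obtain gx where gx: "g x' = ereal gx" using x'(1) not_MInf[of x'] by (cases "g x'") (auto simp: H_def)
  have growth: "inner p x' + gx + \<mu> / 2 * (norm (y - x'))\<^sup>2 \<le> inner p y + b" if "g y = ereal b" for y b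
    using x'(2)[of y] x'(1) gx that by (simp add: H_def add.commute)
  have "x = x'" unfolding x_def xg_def
  proof (rule the_equality)
    show "\<forall>y. ereal (inner p x') + g x' \<le> ereal (inner p y) + g y"
    proof
      fix y show "ereal (inner p x') + g x' \<le> ereal (inner p y) + g y"
      proof (cases "g y")
        case (real b)
        have "0 \<le> \<mu> / 2 * (norm (y - x'))\<^sup>2" using mu by simp
        then show ?thesis using growth[OF real] real gx by simp
      qed (use not_MInf in auto)
    qed
  next
    fix z assume "\<forall>y. ereal (inner p z) + g z \<le> ereal (inner p y) + g y"
    then have "ereal (inner p z) + g z \<le> ereal (inner p x') + g x'" by blast
    then obtain b where b: "g z = ereal b" "inner p z + b \<le> inner p x' + gx"
      using gx not_MInf[of z] by (cases "g z") auto
    have "\<mu> / 2 * (norm (z - x'))\<^sup>2 \<le> 0" using growth[OF b(1)] b(2) by simp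
    then have "(norm (z - x'))\<^sup>2 \<le> 0" using mu by (simp add: mult_le_0_iff)
    then show "z = x'" by simp
  qed
  then show ?thesis using gx growth by blast
qed

lemma fconj_reg_le_fconj:
  assumes "\<rho> \<ge> 0"
  shows "fconj_reg \<rho> f q \<le> fconj f q"
  unfolding fconj_reg_def fconj_def
proof (rule SUP_mono)
  fix x
  have "ereal (inner q x - \<rho> / 2 * (norm x)\<^sup>2) - f x \<le> ereal (inner q x) - f x"
    using assms by (intro ereal_minus_mono) auto
  then show "\<exists>y\<in>UNIV. ereal (inner q x - \<rho> / 2 * (norm x)\<^sup>2) - f x \<le> ereal (inner q y) - f y" by blast
qed

lemma Dconst_upper:
  assumes "bounded (edom f)" "f x \<noteq> \<infinity>"
  shows "(norm x)\<^sup>2 / 2 \<le> Dconst f"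
proof -
  obtain a where a: "\<forall>x\<in>edom f. norm x \<le> a" using assms(1) unfolding bounded_iff by blast
  have "bdd_above ((\<lambda>x. (norm x)\<^sup>2 / 2) ` edom f)"
    by (rule bdd_aboveI2[where M = "a\<^sup>2 / 2"]) (use a in \<open>simp add: power_mono\<close>)
  moreover have "x \<in> edom f" using assms(2) by (simp add: edom_def top.not_eq_extremum)
  ultimately show ?thesis unfolding Dconst_def by (rule cSUP_upper2) simp
qed

lemma fconj_le_fconj_reg_add:
  assumes proper: "proper_fun f" and bounded: "bounded (edom f)" and rho: "\<rho> \<ge> 0"
  shows "fconj f q \<le> fconj_reg \<rho> f q + ereal (\<rho> * Dconst f)"
  unfolding fconj_def
proof (rule SUP_least)
  fix x
  show "ereal (inner q x) - f x \<le> fconj_reg \<rho> f q + ereal (\<rho> * Dconst f)"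
  proof (cases "f x")
    case (real b)
    have "ereal (inner q x - \<rho> / 2 * (norm x)\<^sup>2) - f x \<le> fconj_reg \<rho> f q"
      unfolding fconj_reg_def by (rule SUP_upper) simp
    moreover have "\<rho> / 2 * (norm x)\<^sup>2 \<le> \<rho> * Dconst f"
      using mult_left_mono[OF Dconst_upper[OF bounded, of x] rho] real by simp
    ultimately have "ereal (inner q x - \<rho> / 2 * (norm x)\<^sup>2 - b) + ereal (\<rho> / 2 * (norm x)\<^sup>2)
        \<le> fconj_reg \<rho> f q + ereal (\<rho> * Dconst f)"
      using real by (intro add_mono) auto
    then show ?thesis using real by simp
  next
    case MInf then show ?thesis using proper unfolding proper_fun_def by auto
  qed simp
qed

lemma fconj_reg_at_xf:
  fixes f :: "'a::{real_inner,complete_space} \<Rightarrow> ereal" and Astar :: "'m \<Rightarrow> 'a"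
    and \<rho> :: real and p :: 'm
  defines "x \<equiv> xf \<rho> f Astar p"
  assumes rho: "\<rho> > 0" and proper: "proper_fun f" and convex: "convex_fun f" and lsc: "lsc_fun f"
  shows "fconj_reg \<rho> f (Astar p) = ereal (inner (Astar p) x - \<rho> / 2 * (norm x)\<^sup>2 - real_of_ereal (f x))"
proof -
  obtain fx where fx: "f x = ereal fx" and growth: "\<And>y b. f y = ereal b \<Longrightarrow>
      fx + \<rho> / 2 * (norm x)\<^sup>2 - inner (Astar p) x + \<rho> / 2 * (norm (y - x))\<^sup>2
        \<le> b + \<rho> / 2 * (norm y)\<^sup>2 - inner (Astar p) y"
    using xf_characterization[OF rho proper convex lsc, of Astar p] unfolding x_def by blast
  show ?thesis unfolding fconj_reg_def
  proof (rule antisym)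
    show "(SUP y. ereal (inner (Astar p) y - \<rho> / 2 * (norm y)\<^sup>2) - f y)
        \<le> ereal (inner (Astar p) x - \<rho> / 2 * (norm x)\<^sup>2 - real_of_ereal (f x))"
    proof (rule SUP_least)
      fix y show "ereal (inner (Astar p) y - \<rho> / 2 * (norm y)\<^sup>2) - f y
          \<le> ereal (inner (Astar p) x - \<rho> / 2 * (norm x)\<^sup>2 - real_of_ereal (f x))"
      proof (cases "f y")
        case (real b)
        have "0 \<le> \<rho> / 2 * (norm (y - x))\<^sup>2" using rho by simp
        then show ?thesis using growth[OF real] real fx by simp
      next
        case MInf then show ?thesis using proper unfolding proper_fun_def by auto
      qed simp
    qed
    show "ereal (inner (Astar p) x - \<rho> / 2 * (norm x)\<^sup>2 - real_of_ereal (f x))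
        \<le> (SUP y. ereal (inner (Astar p) y - \<rho> / 2 * (norm y)\<^sup>2) - f y)"
      by (rule SUP_upper2[of x]) (use fx in simp_all)
  qed
qed

lemma fconj_at_xg:
  fixes g :: "'b::{real_inner,complete_space} \<Rightarrow> ereal" and p :: 'b
  defines "x \<equiv> xg g p"
  assumes mu: "\<mu> > 0" and proper: "proper_fun g" and sc: "strongly_convex_fun \<mu> g" and lsc: "lsc_fun g"
  shows "fconj g (- p) = ereal (- inner p x - real_of_ereal (g x))"
proof -
  obtain gx where gx: "g x = ereal gx" and growth: "\<And>y b. g y = ereal b \<Longrightarrow>
      inner p x + gx + \<mu> / 2 * (norm (y - x))\<^sup>2 \<le> inner p y + b"
    using xg_characterization[OF mu proper sc lsc, of p] unfolding x_def by blast
  show ?thesis unfolding fconj_def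
  proof (rule antisym)
    show "(SUP y. ereal (inner (- p) y) - g y) \<le> ereal (- inner p x - real_of_ereal (g x))"
    proof (rule SUP_least)
      fix y show "ereal (inner (- p) y) - g y \<le> ereal (- inner p x - real_of_ereal (g x))"
      proof (cases "g y")
        case (real b)
        have "0 \<le> \<mu> / 2 * (norm (y - x))\<^sup>2" using mu by simp
        then show ?thesis using growth[OF real] real gx by simp
      next
        case MInf then show ?thesis using proper unfolding proper_fun_def by auto
      qed simp
    qed
    show "ereal (- inner p x - real_of_ereal (g x)) \<le> (SUP y. ereal (inner (- p) y) - g y)"
      by (rule SUP_upper2[of x]) (use gx in simp_all)
  qed
qed

lemma mult_le_weighted_squares:
  fixes a b \<rho> :: real
  assumes "\<rho> > 0"
  shows "a * b \<le> a\<^sup>2 / (2 * \<rho>) + \<rho> / 2 * b\<^sup>2"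
proof -
  have "0 \<le> (a - \<rho> * b)\<^sup>2" by simp
  then have "2 * \<rho> * (a * b) \<le> 2 * \<rho> * (a\<^sup>2 / (2 * \<rho>) + \<rho> / 2 * b\<^sup>2)"
    using assms by (simp add: power2_eq_square algebra_simps)
  then show ?thesis using assms by simp
qed

text \<open>A value function p \<mapsto> max_x (inner p (A x) - rho/2 |x|^2 - f x), given through its maximizers
  X p and their quadratic-growth property, is convex with gradient A (X p) and has an
  (onorm A)^2/rho-Lipschitz gradient; we record this as the two-sided first-order bound.\<close>

lemma regularized_value_function_bounds:
  fixes A :: "'a::real_inner \<Rightarrow> 'b::real_inner" and X :: "'b \<Rightarrow> 'a" and fX :: "'b \<Rightarrow> real"
  assumes A: "bounded_linear A" and rho: "\<rho> > 0"
    and growth: "\<And>p q. fX p + \<rho> / 2 * (norm (X p))\<^sup>2 - inner p (A (X p)) + \<rho> / 2 * (norm (X q - X p))\<^sup>2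
                   \<le> fX q + \<rho> / 2 * (norm (X q))\<^sup>2 - inner p (A (X q))"
    and \<Phi>: "\<And>p. \<Phi> p = inner p (A (X p)) - \<rho> / 2 * (norm (X p))\<^sup>2 - fX p"
  shows "\<Phi> p + inner (q - p) (A (X p)) \<le> \<Phi> q"
    and "\<Phi> q \<le> \<Phi> p + inner (q - p) (A (X p)) + (onorm A)\<^sup>2 / (2 * \<rho>) * (norm (q - p))\<^sup>2"
proof -
  have "0 \<le> \<rho> / 2 * (norm (X p - X q))\<^sup>2" using rho by simp
  then show "\<Phi> p + inner (q - p) (A (X p)) \<le> \<Phi> q"
    using growth[of q p] unfolding \<Phi> by (simp add: inner_diff_left)
next
  interpret bounded_linear A by fact
  have "inner (q - p) (A (X q) - A (X p)) \<le> norm (q - p) * norm (A (X q - X p))"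
    using Cauchy_Schwarz_ineq2[of "q - p" "A (X q - X p)"] by (simp add: diff)
  also have "\<dots> \<le> (onorm A * norm (q - p)) * norm (X q - X p)"
    using mult_left_mono[OF onorm[OF A, of "X q - X p"] norm_ge_zero[of "q - p"]] by (simp add: mult_ac)
  also have "\<dots> \<le> (onorm A)\<^sup>2 / (2 * \<rho>) * (norm (q - p))\<^sup>2 + \<rho> / 2 * (norm (X q - X p))\<^sup>2"
    using mult_le_weighted_squares[OF rho, of "onorm A * norm (q - p)" "norm (X q - X p)"]
    by (simp add: power_mult_distrib)
  finally show "\<Phi> q \<le> \<Phi> p + inner (q - p) (A (X p)) + (onorm A)\<^sup>2 / (2 * \<rho>) * (norm (q - p))\<^sup>2"
    using growth[of p q] unfolding \<Phi> by (simp add: inner_diff_left inner_diff_right algebra_simps)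
qed

text \<open>Similarly, p \<mapsto> max_y (- inner p y - g y) with mu-strongly convex g is convex with the
  1/mu-Lipschitz gradient - Y p.\<close>

lemma strongly_convex_value_function_bounds:
  fixes Y :: "'b::real_inner \<Rightarrow> 'b" and gY :: "'b \<Rightarrow> real"
  assumes mu: "\<mu> > 0"
    and growth: "\<And>p q. inner p (Y p) + gY p + \<mu> / 2 * (norm (Y q - Y p))\<^sup>2 \<le> inner p (Y q) + gY q"
    and \<Psi>: "\<And>p. \<Psi> p = - inner p (Y p) - gY p"
  shows "\<Psi> p - inner (q - p) (Y p) \<le> \<Psi> q"
    and "\<Psi> q \<le> \<Psi> p - inner (q - p) (Y p) + 1 / (2 * \<mu>) * (norm (q - p))\<^sup>2"
proof -
  have "0 \<le> \<mu> / 2 * (norm (Y p - Y q))\<^sup>2" using mu by simp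
  then show "\<Psi> p - inner (q - p) (Y p) \<le> \<Psi> q"
    using growth[of q p] unfolding \<Psi> by (simp add: inner_diff_left)
next
  have "- inner (q - p) (Y q - Y p) \<le> norm (q - p) * norm (Y q - Y p)"
    using Cauchy_Schwarz_ineq2[of "q - p" "Y q - Y p"] by linarith
  also have "\<dots> \<le> (norm (q - p))\<^sup>2 / (2 * \<mu>) + \<mu> / 2 * (norm (Y q - Y p))\<^sup>2"
    by (rule mult_le_weighted_squares[OF mu])
  finally show "\<Psi> q \<le> \<Psi> p - inner (q - p) (Y p) + 1 / (2 * \<mu>) * (norm (q - p))\<^sup>2"
    using growth[of p q] unfolding \<Psi> by (simp add: inner_diff_left inner_diff_right algebra_simps)
qed

definition theta_reg :: "real \<Rightarrow> ('a::real_inner \<Rightarrow> ereal) \<Rightarrow> ('b::real_inner \<Rightarrow> ereal) \<Rightarrow> ('b \<Rightarrow> 'a) \<Rightarrow> 'b \<Rightarrow> real" where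
  "theta_reg \<rho> f g Astar p = real_of_ereal (fconj_reg \<rho> f (Astar p)) + real_of_ereal (fconj g (- p))"

text \<open>The standing assumptions on f, g and A (without the boundedness of dom f).\<close>

locale composite_problem =
  fixes f :: "'a::{real_inner,complete_space} \<Rightarrow> ereal" and g :: "'b::{real_inner,complete_space} \<Rightarrow> ereal"
    and A :: "'a \<Rightarrow> 'b" and Astar :: "'b \<Rightarrow> 'a" and \<mu> :: real
  assumes f_proper: "proper_fun f" and f_convex: "convex_fun f" and f_lsc: "lsc_fun f"
    and g_proper: "proper_fun g" and g_lsc: "lsc_fun g"
    and mu_pos: "\<mu> > 0" and g_sc: "strongly_convex_fun \<mu> g"
    and A_lin: "bounded_linear A"
    and Astar_adj: "\<And>q x. inner (Astar q) x = inner q (A x)"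
begin

lemma theta_reg_first_order_bounds:
  assumes rho: "\<rho> > 0"
  shows "theta_reg \<rho> f g Astar p + inner (A (xf \<rho> f Astar p) - xg g p) (q - p) \<le> theta_reg \<rho> f g Astar q"
    and "theta_reg \<rho> f g Astar q \<le> theta_reg \<rho> f g Astar p + inner (A (xf \<rho> f Astar p) - xg g p) (q - p)
           + ((onorm A)\<^sup>2 / \<rho> + 1 / \<mu>) / 2 * (norm (q - p))\<^sup>2"
proof -
  define X where "X p = xf \<rho> f Astar p" for p
  define Y where "Y p = xg g p" for p
  define fX where "fX p = real_of_ereal (f (X p))" for p
  define gY where "gY p = real_of_ereal (g (Y p))" for p
  have X: "f (X p) = ereal (fX p) \<and> (\<forall>y b. f y = ereal b \<longrightarrow> fX p + \<rho> / 2 * (norm (X p))\<^sup>2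
      - inner p (A (X p)) + \<rho> / 2 * (norm (y - X p))\<^sup>2 \<le> b + \<rho> / 2 * (norm y)\<^sup>2 - inner p (A y))" for p
    using xf_characterization[OF rho f_proper f_convex f_lsc, of Astar p]
    unfolding X_def fX_def Astar_adj by auto
  have Y: "g (Y p) = ereal (gY p) \<and> (\<forall>y b. g y = ereal b \<longrightarrow> inner p (Y p) + gY p
      + \<mu> / 2 * (norm (y - Y p))\<^sup>2 \<le> inner p y + b)" for p
    using xg_characterization[OF mu_pos g_proper g_sc g_lsc, of p] unfolding Y_def gY_def by auto
  define \<Phi> where "\<Phi> p = inner p (A (X p)) - \<rho> / 2 * (norm (X p))\<^sup>2 - fX p" for p
  define \<Psi> where "\<Psi> p = - inner p (Y p) - gY p" for p
  have theta_reg: "theta_reg \<rho> f g Astar p = \<Phi> p + \<Psi> p" for p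
    using fconj_reg_at_xf[OF rho f_proper f_convex f_lsc, of Astar p] fconj_at_xg[OF mu_pos g_proper g_sc g_lsc, of p]
    unfolding theta_reg_def \<Phi>_def \<Psi>_def X_def Y_def fX_def gY_def Astar_adj by simp
  have growth_X: "fX p + \<rho> / 2 * (norm (X p))\<^sup>2 - inner p (A (X p)) + \<rho> / 2 * (norm (X q - X p))\<^sup>2
      \<le> fX q + \<rho> / 2 * (norm (X q))\<^sup>2 - inner p (A (X q))" for p q
    using X[of p] X[of q] by blast
  have growth_Y: "inner p (Y p) + gY p + \<mu> / 2 * (norm (Y q - Y p))\<^sup>2 \<le> inner p (Y q) + gY q" for p q
    using Y[of p] Y[of q] by blast
  note \<Phi>_bounds = regularized_value_function_bounds[OF A_lin rho growth_X \<Phi>_def]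
  note \<Psi>_bounds = strongly_convex_value_function_bounds[OF mu_pos growth_Y \<Psi>_def]
  have gradient: "inner (A (X p) - Y p) (q - p) = inner (q - p) (A (X p)) - inner (q - p) (Y p)" for p q
    by (metis inner_commute inner_diff_left)
  show "theta_reg \<rho> f g Astar p + inner (A (xf \<rho> f Astar p) - xg g p) (q - p) \<le> theta_reg \<rho> f g Astar q"
    using \<Phi>_bounds(1)[of p q] \<Psi>_bounds(1)[of p q] unfolding theta_reg X_def[symmetric] Y_def[symmetric] gradient
    by linarith
  have "((onorm A)\<^sup>2 / \<rho> + 1 / \<mu>) / 2 * (norm (q - p))\<^sup>2
      = (onorm A)\<^sup>2 / (2 * \<rho>) * (norm (q - p))\<^sup>2 + 1 / (2 * \<mu>) * (norm (q - p))\<^sup>2"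
    by (simp add: algebra_simps)
  then show "theta_reg \<rho> f g Astar q \<le> theta_reg \<rho> f g Astar p + inner (A (xf \<rho> f Astar p) - xg g p) (q - p)
      + ((onorm A)\<^sup>2 / \<rho> + 1 / \<mu>) / 2 * (norm (q - p))\<^sup>2"
    using \<Phi>_bounds(2)[of q p] \<Psi>_bounds(2)[of q p] unfolding theta_reg X_def[symmetric] Y_def[symmetric] gradient
    by linarith
qed

lemma theta_approximation:
  assumes rho: "\<rho> > 0" and bounded: "bounded (edom f)"
  shows "theta f g Astar p = ereal (real_of_ereal (theta f g Astar p))"
    and "theta_reg \<rho> f g Astar p \<le> real_of_ereal (theta f g Astar p)"
    and "real_of_ereal (theta f g Astar p) \<le> theta_reg \<rho> f g Astar p + \<rho> * Dconst f"
proof -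
  obtain a where a: "fconj_reg \<rho> f (Astar p) = ereal a"
    using fconj_reg_at_xf[OF rho f_proper f_convex f_lsc, of Astar p] by blast
  obtain b where b: "fconj g (- p) = ereal b"
    using fconj_at_xg[OF mu_pos g_proper g_sc g_lsc, of p] by blast
  have below: "fconj_reg \<rho> f (Astar p) \<le> fconj f (Astar p)"
    using rho by (intro fconj_reg_le_fconj) simp
  have above: "fconj f (Astar p) \<le> fconj_reg \<rho> f (Astar p) + ereal (\<rho> * Dconst f)"
    using fconj_le_fconj_reg_add[OF f_proper bounded] rho by simp
  obtain c where c: "fconj f (Astar p) = ereal c" using below above a by (cases "fconj f (Astar p)") auto
  have "a \<le> c" "c \<le> a + \<rho> * Dconst f" using below above a c by simp_all
  then show "theta f g Astar p = ereal (real_of_ereal (theta f g Astar p))"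
    and "theta_reg \<rho> f g Astar p \<le> real_of_ereal (theta f g Astar p)"
    and "real_of_ereal (theta f g Astar p) \<le> theta_reg \<rho> f g Astar p + \<rho> * Dconst f"
    unfolding theta_def theta_reg_def a b c by simp_all
qed

end

lemma gradient_step_descent:
  fixes \<phi> :: "'b::real_inner \<Rightarrow> real" and gr :: "'b \<Rightarrow> 'b"
  assumes L: "L > 0"
    and upper: "\<And>x y. \<phi> y \<le> \<phi> x + inner (gr x) (y - x) + L / 2 * (norm (y - x))\<^sup>2"
  shows "\<phi> (y - (1 / L) *\<^sub>R gr y) \<le> \<phi> y - (norm (gr y))\<^sup>2 / (2 * L)"
proof -
  define y' where "y' = y - (1 / L) *\<^sub>R gr y"
  have "\<phi> y' \<le> \<phi> y + inner (gr y) (y' - y) + L / 2 * (norm (y' - y))\<^sup>2" by (rule upper)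
  moreover have "inner (gr y) (y' - y) = - (norm (gr y))\<^sup>2 / L"
    by (simp add: y'_def power2_norm_eq_inner)
  moreover have "L / 2 * (norm (y' - y))\<^sup>2 = (norm (gr y))\<^sup>2 / (2 * L)"
    using L by (simp add: y'_def power2_eq_square)
  moreover have "(norm (gr y))\<^sup>2 / L = (norm (gr y))\<^sup>2 / (2 * L) + (norm (gr y))\<^sup>2 / (2 * L)"
    by (simp add: field_simps)
  ultimately show ?thesis unfolding y'_def by linarith
qed

lemma gradient_zero_at_minimizer:
  fixes \<phi> :: "'b::real_inner \<Rightarrow> real" and gr :: "'b \<Rightarrow> 'b"
  assumes L: "L > 0"
    and upper: "\<And>x y. \<phi> y \<le> \<phi> x + inner (gr x) (y - x) + L / 2 * (norm (y - x))\<^sup>2"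
    and min: "\<And>q. \<phi> p \<le> \<phi> q"
  shows "gr p = 0"
proof -
  have "\<phi> p \<le> \<phi> p - (norm (gr p))\<^sup>2 / (2 * L)"
    using min[of "p - (1 / L) *\<^sub>R gr p"] gradient_step_descent[OF L upper, of p] by linarith
  then show ?thesis using L by (simp add: divide_le_0_iff)
qed

lemma convex_smooth_cocoercive:
  fixes F :: "'b::real_inner \<Rightarrow> real" and G :: "'b \<Rightarrow> 'b"
  assumes L: "L > 0"
    and lower: "\<And>x y. F x + inner (G x) (y - x) \<le> F y"
    and upper: "\<And>x y. F y \<le> F x + inner (G x) (y - x) + L / 2 * (norm (y - x))\<^sup>2"
  shows "F x + inner (G x) (y - x) + (norm (G y - G x))\<^sup>2 / (2 * L) \<le> F y"
proof -
  define d where "d = G y - G x"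
  define z where "z = y - (1 / L) *\<^sub>R d"
  have "F z \<le> F y + inner (G y) (z - y) + L / 2 * (norm (z - y))\<^sup>2" by (rule upper)
  moreover have "inner (G y) (z - y) = - (inner (G y) d / L)" by (simp add: z_def)
  moreover have "L / 2 * (norm (z - y))\<^sup>2 = (norm d)\<^sup>2 / (2 * L)"
    using L by (simp add: z_def power2_eq_square)
  moreover have "F x + inner (G x) (z - x) \<le> F z" by (rule lower)
  moreover have "inner (G x) (z - x) = inner (G x) (y - x) - inner (G x) d / L"
    by (simp add: z_def inner_diff_right)
  moreover have "inner (G y) d - inner (G x) d = (norm d)\<^sup>2"
    by (simp add: d_def power2_norm_eq_inner inner_diff_left)
  then have "inner (G y) d / L - inner (G x) d / L = (norm d)\<^sup>2 / (2 * L) + (norm d)\<^sup>2 / (2 * L)"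
    using L by (simp add: field_simps)
  ultimately show ?thesis unfolding d_def by linarith
qed

lemma first_order_lower_bound_imp_strongly_convex_dom:
  fixes \<phi> :: "'b::real_inner \<Rightarrow> real" and gr :: "'b \<Rightarrow> 'b"
  assumes lower: "\<And>x y. \<phi> x + inner (gr x) (y - x) + \<kappa> / 2 * (norm (y - x))\<^sup>2 \<le> \<phi> y"
  shows "strongly_convex_dom \<kappa> (\<lambda>x. ereal (\<phi> x))"
  unfolding strongly_convex_dom_def
proof (intro conjI allI impI)
  fix x y :: 'b and t :: real assume t: "0 < t" "t < 1"
  define z where "z = t *\<^sub>R x + (1 - t) *\<^sub>R y"
  define I where "I = inner (gr z) (x - y)"
  have "x - z = (1 - t) *\<^sub>R (x - y)" "y - z = (- t) *\<^sub>R (x - y)" by (simp_all add: z_def algebra_simps)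
  then have "\<phi> z + (1 - t) * I + \<kappa> / 2 * ((1 - t)\<^sup>2 * (norm (x - y))\<^sup>2) \<le> \<phi> x"
    and "\<phi> z - t * I + \<kappa> / 2 * (t\<^sup>2 * (norm (x - y))\<^sup>2) \<le> \<phi> y"
    using lower[of z x] lower[of z y] t unfolding I_def by (simp_all add: power_mult_distrib)
  then have "t * (\<phi> z + (1 - t) * I + \<kappa> / 2 * ((1 - t)\<^sup>2 * (norm (x - y))\<^sup>2))
      + (1 - t) * (\<phi> z - t * I + \<kappa> / 2 * (t\<^sup>2 * (norm (x - y))\<^sup>2)) \<le> t * \<phi> x + (1 - t) * \<phi> y"
    using t by (intro add_mono mult_left_mono) auto
  moreover have "t * (\<phi> z + (1 - t) * I + \<kappa> / 2 * ((1 - t)\<^sup>2 * (norm (x - y))\<^sup>2))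
      + (1 - t) * (\<phi> z - t * I + \<kappa> / 2 * (t\<^sup>2 * (norm (x - y))\<^sup>2))
      = \<phi> z + \<kappa> / 2 * t * (1 - t) * (norm (x - y))\<^sup>2"
    by (simp add: power2_eq_square field_simps)
  ultimately have "\<phi> z \<le> t * \<phi> x + (1 - t) * \<phi> y - \<kappa> / 2 * t * (1 - t) * (norm (x - y))\<^sup>2"
    by linarith
  then show "ereal (\<phi> (t *\<^sub>R x + (1 - t) *\<^sub>R y)) \<le> ereal (t * real_of_ereal (ereal (\<phi> x))
      + (1 - t) * real_of_ereal (ereal (\<phi> y)) - \<kappa> / 2 * t * (1 - t) * (norm (x - y))\<^sup>2)"
    by (simp add: z_def)
qed simp

lemma first_order_lower_bound_imp_lsc:
  fixes \<phi> :: "'b::real_inner \<Rightarrow> real" and gr :: "'b \<Rightarrow> 'b"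
  assumes lower: "\<And>x y. \<phi> x + inner (gr x) (y - x) \<le> \<phi> y"
  shows "lsc_fun (\<lambda>x. ereal (\<phi> x))"
  unfolding lsc_fun_def closed_sequential_limits
proof (intro allI impI, elim conjE)
  fix c :: real and X and l :: 'b assume X: "\<forall>n. X n \<in> {x. ereal (\<phi> x) \<le> ereal c}" and lim: "X \<longlonglongrightarrow> l"
  have bound: "\<phi> l \<le> c + norm (gr l) * norm (X n - l)" for n
  proof -
    have "- (norm (gr l) * norm (X n - l)) \<le> inner (gr l) (X n - l)"
      using Cauchy_Schwarz_ineq2[of "gr l" "X n - l"] by linarith
    moreover have "\<phi> (X n) \<le> c" using X by simp
    moreover have "\<phi> l + inner (gr l) (X n - l) \<le> \<phi> (X n)" by (rule lower)
    ultimately show ?thesis by linarith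
  qed
  have "(\<lambda>n. norm (X n - l)) \<longlonglongrightarrow> 0" using lim by (simp add: LIM_zero tendsto_norm_zero)
  then have "(\<lambda>n. c + norm (gr l) * norm (X n - l)) \<longlonglongrightarrow> c + norm (gr l) * 0"
    by (intro tendsto_intros)
  then have "\<phi> l \<le> c" using bound by (simp add: LIMSEQ_le_const)
  then show "l \<in> {x. ereal (\<phi> x) \<le> ereal c}" by simp
qed

lemma strongly_convex_lower_bound_has_min:
  fixes \<phi> :: "'b::{real_inner,complete_space} \<Rightarrow> real" and gr :: "'b \<Rightarrow> 'b"
  assumes \<kappa>: "\<kappa> > 0"
    and lower: "\<And>x y. \<phi> x + inner (gr x) (y - x) + \<kappa> / 2 * (norm (y - x))\<^sup>2 \<le> \<phi> y"
  shows "\<exists>p. \<forall>q. \<phi> p \<le> \<phi> q"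
proof -
  have "\<phi> x + inner (gr x) (y - x) \<le> \<phi> y" for x y
  proof -
    have "0 \<le> \<kappa> / 2 * (norm (y - x))\<^sup>2" using \<kappa> by simp
    then show ?thesis using lower[of x y] by linarith
  qed
  then have "lsc_fun (\<lambda>x. ereal (\<phi> x))" by (rule first_order_lower_bound_imp_lsc)
  then show ?thesis
    using strongly_convex_dom_has_min[OF first_order_lower_bound_imp_strongly_convex_dom[OF lower] \<kappa>, of 0 "\<phi> 0"]
    by auto
qed

lemma norm_diff_scaleR_sq:
  fixes a g :: "'b::real_inner"
  shows "(norm (a - c *\<^sub>R g))\<^sup>2 = (norm a)\<^sup>2 - 2 * c * inner g a + c\<^sup>2 * (norm g)\<^sup>2"
  unfolding power2_norm_eq_inner by (simp add: inner_diff inner_commute power2_eq_square algebra_simps)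

text \<open>One step of the fast gradient method decreases the Lyapunov function
  phi p - phi x + kappa/2 |v - x|^2 by the factor 1 - alpha, where alpha = sqrt (kappa/L) and v is
  the auxiliary "estimate sequence" point coupled to p and the extrapolated point y.\<close>

lemma fgm_lyapunov_step:
  fixes \<phi> :: "'b::real_inner \<Rightarrow> real" and gr :: "'b \<Rightarrow> 'b"
  assumes \<kappa>: "\<kappa> > 0" and L: "L > 0" and \<alpha>: "0 < \<alpha>" "\<alpha> < 1" "\<alpha>\<^sup>2 = \<kappa> / L"
    and lower: "\<And>x y. \<phi> x + inner (gr x) (y - x) + \<kappa> / 2 * (norm (y - x))\<^sup>2 \<le> \<phi> y"
    and upper: "\<And>x y. \<phi> y \<le> \<phi> x + inner (gr x) (y - x) + L / 2 * (norm (y - x))\<^sup>2"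
    and p': "p' = y - (1 / L) *\<^sub>R gr y"
    and v': "v' = (1 - \<alpha>) *\<^sub>R v + \<alpha> *\<^sub>R y - (\<alpha> / \<kappa>) *\<^sub>R gr y"
    and coupling: "\<alpha> *\<^sub>R v = (1 + \<alpha>) *\<^sub>R y - p"
  shows "\<phi> p' - \<phi> x + \<kappa> / 2 * (norm (v' - x))\<^sup>2 \<le> (1 - \<alpha>) * (\<phi> p - \<phi> x + \<kappa> / 2 * (norm (v - x))\<^sup>2)"
proof -
  define g where "g = gr y"
  define a where "a = (1 - \<alpha>) *\<^sub>R (v - x) + \<alpha> *\<^sub>R (y - x)"
  have "v' - x = a - (\<alpha> / \<kappa>) *\<^sub>R g" unfolding a_def g_def v' by (simp add: algebra_simps)
  then have "(norm (v' - x))\<^sup>2 = (norm a)\<^sup>2 - 2 * (\<alpha> / \<kappa>) * inner g a + (\<alpha> / \<kappa>)\<^sup>2 * (norm g)\<^sup>2"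
    by (simp add: norm_diff_scaleR_sq)
  then have "\<kappa> / 2 * (norm (v' - x))\<^sup>2
      = \<kappa> / 2 * (norm a)\<^sup>2 - \<kappa> / 2 * (2 * (\<alpha> / \<kappa>) * inner g a) + \<kappa> / 2 * ((\<alpha> / \<kappa>)\<^sup>2 * (norm g)\<^sup>2)"
    by (simp only: distrib_left right_diff_distrib)
  moreover have "\<kappa> / 2 * (2 * (\<alpha> / \<kappa>) * inner g a) = \<alpha> * inner g a" using \<kappa> by simp
  moreover have "(\<alpha> / \<kappa>)\<^sup>2 = 1 / (L * \<kappa>)"
    using \<alpha>(3) \<kappa> by (simp add: power_divide power2_eq_square)
  then have "\<kappa> / 2 * ((\<alpha> / \<kappa>)\<^sup>2 * (norm g)\<^sup>2) = (norm g)\<^sup>2 / (2 * L)" using \<kappa> by simp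
  ultimately have lyapunov': "\<kappa> / 2 * (norm (v' - x))\<^sup>2 = \<kappa> / 2 * (norm a)\<^sup>2 - \<alpha> * inner g a + (norm g)\<^sup>2 / (2 * L)"
    by simp
  have descent: "\<phi> p' \<le> \<phi> y - (norm g)\<^sup>2 / (2 * L)"
    unfolding p' g_def by (rule gradient_step_descent[OF L upper])
  have "\<alpha> *\<^sub>R a = - ((1 - \<alpha>) *\<^sub>R (p - y) + \<alpha> *\<^sub>R (x - y))"
  proof -
    have "\<alpha> *\<^sub>R a = (1 - \<alpha>) *\<^sub>R (\<alpha> *\<^sub>R v) - ((1 - \<alpha>) * \<alpha>) *\<^sub>R x + (\<alpha> * \<alpha>) *\<^sub>R (y - x)"
      by (simp add: a_def algebra_simps)
    also have "\<dots> = - ((1 - \<alpha>) *\<^sub>R (p - y) + \<alpha> *\<^sub>R (x - y))"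
      unfolding coupling by (simp add: algebra_simps)
    finally show ?thesis .
  qed
  then have inner_a: "\<alpha> * inner g a = - (1 - \<alpha>) * inner g (p - y) - \<alpha> * inner g (x - y)"
    by (simp only: inner_scaleR_right[symmetric] inner_minus_right inner_add_right) (simp add: algebra_simps)
  have "(norm a)\<^sup>2 \<le> (1 - \<alpha>) * (norm (v - x))\<^sup>2 + \<alpha> * (norm (y - x))\<^sup>2"
    using norm_convex_combination_sq[of "1 - \<alpha>" "v - x" "y - x"] \<alpha> unfolding a_def by simp
  then have norm_a: "\<kappa> / 2 * (norm a)\<^sup>2 \<le> \<kappa> / 2 * ((1 - \<alpha>) * (norm (v - x))\<^sup>2 + \<alpha> * (norm (y - x))\<^sup>2)"
    using \<kappa> by (intro mult_left_mono) auto
  have "\<phi> y + inner g (p - y) + \<kappa> / 2 * (norm (p - y))\<^sup>2 \<le> \<phi> p"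
    unfolding g_def by (rule lower)
  moreover have "0 \<le> \<kappa> / 2 * (norm (p - y))\<^sup>2" using \<kappa> by simp
  ultimately have lower_p: "(1 - \<alpha>) * (\<phi> y + inner g (p - y)) \<le> (1 - \<alpha>) * \<phi> p"
    using \<alpha> by (intro mult_left_mono) simp_all
  have "\<phi> y + inner g (x - y) + \<kappa> / 2 * (norm (x - y))\<^sup>2 \<le> \<phi> x"
    unfolding g_def by (rule lower)
  then have lower_x: "\<alpha> * (\<phi> y + inner g (x - y) + \<kappa> / 2 * (norm (y - x))\<^sup>2) \<le> \<alpha> * \<phi> x"
    using \<alpha> by (intro mult_left_mono) (simp_all add: norm_minus_commute)
  show ?thesis using lyapunov' descent inner_a norm_a lower_p lower_x by (simp add: algebra_simps) argo
qed

text \<open>The momentum coefficient (sqrt L - sqrt kappa)/(sqrt L + sqrt kappa) is exactly what makes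
  v k = ((1 + alpha) w k - p k) / alpha evolve by the estimate-sequence recursion used in
  fgm_lyapunov_step.\<close>

lemma fgm_auxiliary_recurrence:
  fixes p w v p' w' v' :: "'b::real_inner" and gr :: "'b \<Rightarrow> 'b"
  assumes \<kappa>: "\<kappa> > 0" and L: "L > 0" and \<alpha>: "\<alpha> = sqrt (\<kappa> / L)"
    and p_step: "p' = w - (1 / L) *\<^sub>R gr w"
    and w_step: "w' = p' + ((sqrt L - sqrt \<kappa>) / (sqrt L + sqrt \<kappa>)) *\<^sub>R (p' - p)"
    and coupling: "\<alpha> *\<^sub>R v = (1 + \<alpha>) *\<^sub>R w - p" and coupling': "\<alpha> *\<^sub>R v' = (1 + \<alpha>) *\<^sub>R w' - p'"
  shows "v' = (1 - \<alpha>) *\<^sub>R v + \<alpha> *\<^sub>R w - (\<alpha> / \<kappa>) *\<^sub>R gr w"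
proof -
  have \<alpha>_pos: "\<alpha> > 0" using \<kappa> L by (simp add: \<alpha>)
  have "sqrt \<kappa> = \<alpha> * sqrt L" using \<kappa> L by (simp add: \<alpha> real_sqrt_divide)
  then have "(sqrt L - sqrt \<kappa>) / (sqrt L + sqrt \<kappa>) = (sqrt L * (1 - \<alpha>)) / (sqrt L * (1 + \<alpha>))"
    by (simp add: algebra_simps)
  also have "\<dots> = (1 - \<alpha>) / (1 + \<alpha>)" using L by simp
  finally have momentum: "(sqrt L - sqrt \<kappa>) / (sqrt L + sqrt \<kappa>) = (1 - \<alpha>) / (1 + \<alpha>)" .
  have step_size: "\<alpha> * (\<alpha> / \<kappa>) = 1 / L" using \<kappa> L by (simp add: \<alpha> flip: power2_eq_square)
  have "(1 + \<alpha>) *\<^sub>R w' = (1 + \<alpha>) *\<^sub>R p' + (1 - \<alpha>) *\<^sub>R (p' - p)"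
    using \<alpha>_pos unfolding w_step momentum by (simp add: scaleR_add_right)
  then have "\<alpha> *\<^sub>R v' = p' + (1 - \<alpha>) *\<^sub>R (p' - p) + \<alpha> *\<^sub>R p' - p'"
    unfolding coupling' by (simp add: algebra_simps)
  also have "\<dots> = p' - (1 - \<alpha>) *\<^sub>R p"
    by (simp add: algebra_simps)
  also have "\<dots> = (1 - \<alpha>) *\<^sub>R ((1 + \<alpha>) *\<^sub>R w - p) + (\<alpha> * \<alpha>) *\<^sub>R w - (1 / L) *\<^sub>R gr w"
    unfolding p_step by (simp add: algebra_simps)
  also have "\<dots> = \<alpha> *\<^sub>R ((1 - \<alpha>) *\<^sub>R v + \<alpha> *\<^sub>R w - (\<alpha> / \<kappa>) *\<^sub>R gr w)"
  proof -
    have "\<alpha> *\<^sub>R ((1 - \<alpha>) *\<^sub>R v + \<alpha> *\<^sub>R w - (\<alpha> / \<kappa>) *\<^sub>R gr w)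
        = (1 - \<alpha>) *\<^sub>R (\<alpha> *\<^sub>R v) + (\<alpha> * \<alpha>) *\<^sub>R w - (\<alpha> * (\<alpha> / \<kappa>)) *\<^sub>R gr w"
      by (simp add: algebra_simps)
    then show ?thesis unfolding coupling step_size by simp
  qed
  finally show ?thesis using \<alpha>_pos by simp
qed

lemma fgm_rate:
  fixes \<phi> :: "'b::real_inner \<Rightarrow> real" and gr :: "'b \<Rightarrow> 'b" and p w :: "nat \<Rightarrow> 'b"
  assumes \<kappa>: "\<kappa> > 0" and \<kappa>_L: "\<kappa> < L"
    and lower: "\<And>x y. \<phi> x + inner (gr x) (y - x) + \<kappa> / 2 * (norm (y - x))\<^sup>2 \<le> \<phi> y"
    and upper: "\<And>x y. \<phi> y \<le> \<phi> x + inner (gr x) (y - x) + L / 2 * (norm (y - x))\<^sup>2"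
    and p0: "p 0 = 0" and w0: "w 0 = 0"
    and p_step: "\<And>k. p (Suc k) = w k - (1 / L) *\<^sub>R gr (w k)"
    and w_step: "\<And>k. w (Suc k) = p (Suc k) + ((sqrt L - sqrt \<kappa>) / (sqrt L + sqrt \<kappa>)) *\<^sub>R (p (Suc k) - p k)"
  shows "\<phi> (p k) - \<phi> x \<le> (\<phi> 0 - \<phi> x + \<kappa> / 2 * (norm x)\<^sup>2) * (1 - sqrt (\<kappa> / L))^k"
proof -
  have L: "L > 0" using \<kappa> \<kappa>_L by simp
  define \<alpha> where "\<alpha> = sqrt (\<kappa> / L)"
  have \<alpha>: "0 < \<alpha>" "\<alpha> < 1" "\<alpha>\<^sup>2 = \<kappa> / L" using \<kappa> \<kappa>_L L by (simp_all add: \<alpha>_def)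
  define v where "v k = (1 / \<alpha>) *\<^sub>R ((1 + \<alpha>) *\<^sub>R w k - p k)" for k
  have coupling: "\<alpha> *\<^sub>R v k = (1 + \<alpha>) *\<^sub>R w k - p k" for k using \<alpha> by (simp add: v_def)
  define E where "E k = \<phi> (p k) - \<phi> x + \<kappa> / 2 * (norm (v k - x))\<^sup>2" for k
  have E_step: "E (Suc k) \<le> (1 - \<alpha>) * E k" for k
  proof -
    have "v (Suc k) = (1 - \<alpha>) *\<^sub>R v k + \<alpha> *\<^sub>R w k - (\<alpha> / \<kappa>) *\<^sub>R gr (w k)"
      using fgm_auxiliary_recurrence[where gr = gr, OF \<kappa> L \<alpha>_def p_step[of k] w_step[of k] coupling[of k] coupling[of "Suc k"]] .
    then show ?thesis unfolding E_def by (rule fgm_lyapunov_step[OF \<kappa> L \<alpha> lower upper p_step[of k] _ coupling])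
  qed
  have E_rate: "E k \<le> (1 - \<alpha>)^k * E 0" for k
  proof (induction k)
    case (Suc k)
    have "E (Suc k) \<le> (1 - \<alpha>) * E k" by (rule E_step)
    also have "\<dots> \<le> (1 - \<alpha>) * ((1 - \<alpha>)^k * E 0)" using Suc \<alpha> by (intro mult_left_mono) auto
    finally show ?case by simp
  qed simp
  have "\<phi> (p k) - \<phi> x \<le> E k" using \<kappa> by (simp add: E_def)
  also have "\<dots> \<le> (1 - \<alpha>)^k * E 0" by (rule E_rate)
  finally show ?thesis by (simp add: E_def v_def p0 w0 \<alpha>_def mult.commute)
qed

lemma regularization_first_order_bounds:
  fixes F :: "'b::real_inner \<Rightarrow> real" and G :: "'b \<Rightarrow> 'b"
  assumes lower: "\<And>x y. F x + inner (G x) (y - x) \<le> F y"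
    and upper: "\<And>x y. F y \<le> F x + inner (G x) (y - x) + LF / 2 * (norm (y - x))\<^sup>2"
  shows "(F x + \<kappa> / 2 * (norm x)\<^sup>2) + inner (G x + \<kappa> *\<^sub>R x) (y - x) + \<kappa> / 2 * (norm (y - x))\<^sup>2
      \<le> F y + \<kappa> / 2 * (norm y)\<^sup>2"
    and "F y + \<kappa> / 2 * (norm y)\<^sup>2
      \<le> (F x + \<kappa> / 2 * (norm x)\<^sup>2) + inner (G x + \<kappa> *\<^sub>R x) (y - x) + (LF + \<kappa>) / 2 * (norm (y - x))\<^sup>2"
proof -
  have expand: "\<kappa> / 2 * (norm y)\<^sup>2 = \<kappa> / 2 * (norm x)\<^sup>2 + \<kappa> * inner x (y - x) + \<kappa> / 2 * (norm (y - x))\<^sup>2"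
    unfolding power2_norm_eq_inner by (simp add: inner_diff inner_commute algebra_simps)
  have gradient: "inner (G x + \<kappa> *\<^sub>R x) (y - x) = inner (G x) (y - x) + \<kappa> * inner x (y - x)"
    by (simp add: inner_add_left)
  show "(F x + \<kappa> / 2 * (norm x)\<^sup>2) + inner (G x + \<kappa> *\<^sub>R x) (y - x) + \<kappa> / 2 * (norm (y - x))\<^sup>2
      \<le> F y + \<kappa> / 2 * (norm y)\<^sup>2"
  proof -
    have "F x + inner (G x) (y - x) \<le> F y" by (rule lower)
    then show ?thesis using expand gradient by linarith
  qed
  show "F y + \<kappa> / 2 * (norm y)\<^sup>2
      \<le> (F x + \<kappa> / 2 * (norm x)\<^sup>2) + inner (G x + \<kappa> *\<^sub>R x) (y - x) + (LF + \<kappa>) / 2 * (norm (y - x))\<^sup>2"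
  proof -
    have "F y \<le> F x + inner (G x) (y - x) + LF / 2 * (norm (y - x))\<^sup>2" by (rule upper)
    moreover have "(LF + \<kappa>) / 2 * (norm (y - x))\<^sup>2 = LF / 2 * (norm (y - x))\<^sup>2 + \<kappa> / 2 * (norm (y - x))\<^sup>2"
      by (simp add: algebra_simps)
    ultimately show ?thesis using expand gradient by linarith
  qed
qed

lemma regularized_minimizer_bounds:
  fixes F \<Theta> :: "'b::real_inner \<Rightarrow> real"
  assumes \<kappa>: "\<kappa> > 0"
    and approx: "\<And>q. F q \<le> \<Theta> q" "\<And>q. \<Theta> q \<le> F q + \<delta>"
    and opt: "\<And>q. \<Theta> pstar \<le> \<Theta> q" and pstar_R: "norm pstar \<le> R" and \<delta>_R: "\<delta> \<le> \<kappa> / 2 * R\<^sup>2"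
    and min: "\<And>q. F ph + \<kappa> / 2 * (norm ph)\<^sup>2 \<le> F q + \<kappa> / 2 * (norm q)\<^sup>2"
  shows "norm ph \<le> sqrt 2 * R"
    and "F 0 - (F ph + \<kappa> / 2 * (norm ph)\<^sup>2) + \<kappa> / 2 * (norm ph)\<^sup>2 \<le> \<Theta> 0 - \<Theta> pstar + \<delta>"
proof -
  have "\<kappa> / 2 * (norm pstar)\<^sup>2 \<le> \<kappa> / 2 * R\<^sup>2"
    using pstar_R \<kappa> by (intro mult_left_mono power_mono) auto
  then have upper: "F ph + \<kappa> / 2 * (norm ph)\<^sup>2 \<le> \<Theta> pstar + \<kappa> / 2 * R\<^sup>2"
    using min[of pstar] approx(1)[of pstar] by linarith
  have lower: "\<Theta> pstar - \<delta> + \<kappa> / 2 * (norm ph)\<^sup>2 \<le> F ph + \<kappa> / 2 * (norm ph)\<^sup>2"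
    using opt[of ph] approx(2)[of ph] by linarith
  have "\<kappa> / 2 * (norm ph)\<^sup>2 \<le> \<kappa> / 2 * (2 * R\<^sup>2)" using upper lower \<delta>_R by linarith
  then have "norm ph \<le> sqrt (2 * R\<^sup>2)" using \<kappa> by (simp add: real_le_rsqrt)
  also have "\<dots> = sqrt 2 * R" using order_trans[OF norm_ge_zero pstar_R] by (simp add: real_sqrt_mult)
  finally show "norm ph \<le> sqrt 2 * R" .
  show "F 0 - (F ph + \<kappa> / 2 * (norm ph)\<^sup>2) + \<kappa> / 2 * (norm ph)\<^sup>2 \<le> \<Theta> 0 - \<Theta> pstar + \<delta>"
    using lower approx(1)[of 0] by linarith
qed

lemma sqrt_one_minus_power_le_exp:
  assumes "0 \<le> \<alpha>" "\<alpha> \<le> 1"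
  shows "sqrt ((1 - \<alpha>) ^ k) \<le> exp (- (real k / 2) * \<alpha>)"
proof -
  have "(1 - \<alpha>) ^ k \<le> exp (- \<alpha>) ^ k"
    using assms exp_ge_add_one_self[of "- \<alpha>"] by (intro power_mono) auto
  also have "\<dots> = (exp (- (real k / 2) * \<alpha>))\<^sup>2"
    by (simp add: power2_eq_square exp_of_nat_mult[symmetric] exp_add[symmetric])
  finally show ?thesis by (simp add: real_le_lsqrt)
qed

text \<open>At the minimizer ph of F + kappa/2 |.|^2 (where G ph = - kappa ph), co-coercivity bounds the
  gradient deviation of F by the optimality gap of the regularized function.\<close>

lemma regularized_gradient_deviation:
  fixes F :: "'b::real_inner \<Rightarrow> real" and G :: "'b \<Rightarrow> 'b"
  assumes LF: "LF > 0" and \<kappa>: "\<kappa> \<ge> 0"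
    and lower: "\<And>x y. F x + inner (G x) (y - x) \<le> F y"
    and upper: "\<And>x y. F y \<le> F x + inner (G x) (y - x) + LF / 2 * (norm (y - x))\<^sup>2"
    and stationary: "G ph + \<kappa> *\<^sub>R ph = 0"
  shows "(norm (G y - G ph))\<^sup>2 \<le> 2 * (LF + \<kappa>) * ((F y + \<kappa> / 2 * (norm y)\<^sup>2) - (F ph + \<kappa> / 2 * (norm ph)\<^sup>2))"
proof -
  have "F ph + inner (G ph) (y - ph) + (norm (G y - G ph))\<^sup>2 / (2 * LF) \<le> F y"
    by (rule convex_smooth_cocoercive[OF LF lower upper])
  moreover have "inner (G ph) (y - ph) = - \<kappa> * inner ph (y - ph)"
    using stationary by (simp add: eq_neg_iff_add_eq_0[symmetric])
  moreover have "\<kappa> / 2 * (norm y)\<^sup>2 = \<kappa> / 2 * (norm ph)\<^sup>2 + \<kappa> * inner ph (y - ph) + \<kappa> / 2 * (norm (y - ph))\<^sup>2"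
    unfolding power2_norm_eq_inner by (simp add: inner_diff inner_commute algebra_simps)
  moreover have "0 \<le> \<kappa> / 2 * (norm (y - ph))\<^sup>2" using \<kappa> by simp
  ultimately have "(norm (G y - G ph))\<^sup>2 / (2 * LF) \<le> (F y + \<kappa> / 2 * (norm y)\<^sup>2) - (F ph + \<kappa> / 2 * (norm ph)\<^sup>2)"
    by linarith
  then have deviation: "(norm (G y - G ph))\<^sup>2 \<le> 2 * LF * ((F y + \<kappa> / 2 * (norm y)\<^sup>2) - (F ph + \<kappa> / 2 * (norm ph)\<^sup>2))"
    using LF by (simp add: pos_divide_le_eq mult.commute)
  then have "0 \<le> 2 * LF * ((F y + \<kappa> / 2 * (norm y)\<^sup>2) - (F ph + \<kappa> / 2 * (norm ph)\<^sup>2))"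
    using zero_le_power2 order_trans by blast
  then have "0 \<le> (F y + \<kappa> / 2 * (norm y)\<^sup>2) - (F ph + \<kappa> / 2 * (norm ph)\<^sup>2)"
    using LF by (simp add: zero_le_mult_iff)
  then have "2 * LF * ((F y + \<kappa> / 2 * (norm y)\<^sup>2) - (F ph + \<kappa> / 2 * (norm ph)\<^sup>2))
      \<le> 2 * (LF + \<kappa>) * ((F y + \<kappa> / 2 * (norm y)\<^sup>2) - (F ph + \<kappa> / 2 * (norm ph)\<^sup>2))"
    using \<kappa> by (intro mult_right_mono) auto
  then show ?thesis using deviation by linarith
qed

text \<open>Abstract form of the main estimate: running the fast gradient method on the regularized
  function F + kappa/2 |.|^2, where F is convex LF-smooth and delta-close to Theta, makes the
  gradient of F small up to the regularization bias sqrt 2 * kappa * R.\<close>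

lemma fgm_gradient_bound:
  fixes F \<Theta> :: "'b::{real_inner,complete_space} \<Rightarrow> real" and G :: "'b \<Rightarrow> 'b" and p w :: "nat \<Rightarrow> 'b"
  assumes \<kappa>: "\<kappa> > 0" and LF: "LF > 0" and L: "L = LF + \<kappa>"
    and lower: "\<And>x y. F x + inner (G x) (y - x) \<le> F y"
    and upper: "\<And>x y. F y \<le> F x + inner (G x) (y - x) + LF / 2 * (norm (y - x))\<^sup>2"
    and approx: "\<And>q. F q \<le> \<Theta> q" "\<And>q. \<Theta> q \<le> F q + \<delta>"
    and opt: "\<And>q. \<Theta> pstar \<le> \<Theta> q" and pstar_R: "norm pstar \<le> R" and \<delta>_R: "\<delta> \<le> \<kappa> / 2 * R\<^sup>2"
    and p0: "p 0 = 0" and w0: "w 0 = 0"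
    and p_step: "\<And>k. p (Suc k) = w k - (1 / L) *\<^sub>R (G (w k) + \<kappa> *\<^sub>R w k)"
    and w_step: "\<And>k. w (Suc k) = p (Suc k) + ((sqrt L - sqrt \<kappa>) / (sqrt L + sqrt \<kappa>)) *\<^sub>R (p (Suc k) - p k)"
  shows "norm (G (p k)) \<le> 2 * sqrt (L * (\<Theta> 0 - \<Theta> pstar + \<delta>)) * exp (- (real k / 2) * sqrt (\<kappa> / L))
           + sqrt 2 * \<kappa> * R"
proof -
  define \<phi> where "\<phi> q = F q + \<kappa> / 2 * (norm q)\<^sup>2" for q
  define gr where "gr q = G q + \<kappa> *\<^sub>R q" for q
  define \<Delta> where "\<Delta> = \<Theta> 0 - \<Theta> pstar + \<delta>"
  have \<Delta>: "0 \<le> L * \<Delta>"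
    using opt[of 0] approx(1)[of 0] approx(2)[of 0] \<kappa> LF L unfolding \<Delta>_def by simp
  have \<phi>_lower: "\<phi> x + inner (gr x) (y - x) + \<kappa> / 2 * (norm (y - x))\<^sup>2 \<le> \<phi> y" for x y
    unfolding \<phi>_def gr_def by (rule regularization_first_order_bounds(1)[OF lower upper])
  have \<phi>_upper: "\<phi> y \<le> \<phi> x + inner (gr x) (y - x) + L / 2 * (norm (y - x))\<^sup>2" for x y
    unfolding \<phi>_def gr_def L by (rule regularization_first_order_bounds(2)[OF lower upper])
  obtain ph where min: "\<And>q. \<phi> ph \<le> \<phi> q"
    using strongly_convex_lower_bound_has_min[OF \<kappa> \<phi>_lower] by blast
  have stationary: "G ph + \<kappa> *\<^sub>R ph = 0"
    using gradient_zero_at_minimizer[OF _ \<phi>_upper min] LF \<kappa> L unfolding gr_def by simp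
  note ph_bounds = regularized_minimizer_bounds[OF \<kappa> approx opt pstar_R \<delta>_R min[unfolded \<phi>_def]]
  define \<alpha> where "\<alpha> = sqrt (\<kappa> / L)"
  have \<alpha>: "0 \<le> \<alpha>" "\<alpha> \<le> 1" using \<kappa> LF L by (simp_all add: \<alpha>_def)
  have "\<phi> (p k) - \<phi> ph \<le> (\<phi> 0 - \<phi> ph + \<kappa> / 2 * (norm ph)\<^sup>2) * (1 - \<alpha>) ^ k"
    unfolding \<alpha>_def using \<kappa> LF L p_step w_step
    by (intro fgm_rate[where \<phi> = \<phi> and gr = gr and p = p and w = w and L = L, OF \<kappa> _ \<phi>_lower \<phi>_upper p0 w0])
      (simp_all add: gr_def)
  also have "\<dots> \<le> \<Delta> * (1 - \<alpha>) ^ k"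
    using ph_bounds(2) \<alpha> unfolding \<phi>_def \<Delta>_def by (intro mult_right_mono) auto
  finally have gap: "\<phi> (p k) - \<phi> ph \<le> \<Delta> * (1 - \<alpha>) ^ k" .
  have "(norm (G (p k) - G ph))\<^sup>2 \<le> 2 * L * (\<phi> (p k) - \<phi> ph)"
    using regularized_gradient_deviation[OF LF _ lower upper stationary] \<kappa> unfolding \<phi>_def L by simp
  also have "\<dots> \<le> 2 * L * (\<Delta> * (1 - \<alpha>) ^ k)" using gap \<kappa> LF L by (intro mult_left_mono) auto
  finally have "norm (G (p k) - G ph) \<le> sqrt 2 * sqrt (L * \<Delta>) * sqrt ((1 - \<alpha>) ^ k)"
    by (simp add: real_le_rsqrt real_sqrt_mult[symmetric] mult_ac)
  also have "\<dots> \<le> 2 * sqrt (L * \<Delta>) * exp (- (real k / 2) * \<alpha>)"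
    using sqrt_one_minus_power_le_exp[OF \<alpha>] \<Delta> \<alpha>
    by (intro mult_mono) (auto simp: sqrt2_less_2 less_imp_le)
  finally have deviation: "norm (G (p k) - G ph) \<le> 2 * sqrt (L * \<Delta>) * exp (- (real k / 2) * \<alpha>)" .
  have "norm (G ph) = \<kappa> * norm ph"
    using stationary \<kappa> by (simp add: eq_neg_iff_add_eq_0[symmetric])
  also have "\<dots> \<le> \<kappa> * (sqrt 2 * R)" using ph_bounds(1) \<kappa> by simp
  finally have "norm (G ph) \<le> sqrt 2 * \<kappa> * R" by (simp add: mult_ac)
  then show ?thesis using deviation norm_triangle_sub[of "G (p k)" "G ph"] unfolding \<Delta>_def \<alpha>_def by linarith
qed

theorem mainTheorem5:
  fixes f :: "'a::{real_inner, complete_space} \<Rightarrow> ereal"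
    and g :: "real^'m \<Rightarrow> ereal"
    and A :: "'a \<Rightarrow> real^'m"
    and Astar :: "real^'m \<Rightarrow> 'a"
    and \<mu> R \<epsilon> \<rho> \<kappa> :: real
    and pstar :: "real^'m"
    and p w :: "nat \<Rightarrow> real^'m"
  assumes f_proper: "proper_fun f" and f_convex: "convex_fun f" and f_lsc: "lsc_fun f"
    and f_bdd: "bounded (edom f)"
    and g_proper: "proper_fun g" and g_lsc: "lsc_fun g"
    and mu_pos: "\<mu> > 0" and g_sc: "strongly_convex_fun \<mu> g"
    and A_lin: "bounded_linear A"
    and Astar_adj: "\<And>q x. inner (Astar q) x = inner q (A x)"
    and dom_inter: "A ` edom f \<inter> edom g \<noteq> {}"
    and pstar_opt: "\<And>q. theta f g Astar pstar \<le> theta f g Astar q"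
    and R_pos: "R > 0" and pstar_R: "norm pstar \<le> R"
    and Df_pos: "Dconst f > 0"
    and eps_pos: "\<epsilon> > 0"
    and rho_def: "\<rho> = \<epsilon> / (3 * Dconst f)"
    and kappa_def: "\<kappa> = 2 * \<epsilon> / (3 * R\<^sup>2)"
    and p0: "p 0 = 0" and w0: "w 0 = 0"
    and p_step: "\<And>k. p (Suc k) = w k - (1 / Lconst (onorm A) \<mu> \<rho> \<kappa>) *\<^sub>R
                   (A (xf \<rho> f Astar (w k)) - xg g (w k) + \<kappa> *\<^sub>R w k)"
    and w_step: "\<And>k. w (Suc k) = p (Suc k) +
                   ((sqrt (Lconst (onorm A) \<mu> \<rho> \<kappa>) - sqrt \<kappa>) /
                    (sqrt (Lconst (onorm A) \<mu> \<rho> \<kappa>) + sqrt \<kappa>)) *\<^sub>R (p (Suc k) - p k)"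
  shows "\<forall>k. norm (A (xf \<rho> f Astar (p k)) - xg g (p k))
           \<le> 2 * sqrt (Lconst (onorm A) \<mu> \<rho> \<kappa> *
                   (real_of_ereal (theta f g Astar 0) - real_of_ereal (theta f g Astar pstar) + \<epsilon> / 3))
               * exp (- (real k / 2) * sqrt (\<kappa> / Lconst (onorm A) \<mu> \<rho> \<kappa>))
             + 4 * sqrt 2 * \<epsilon> / (3 * R)"
proof
  fix k
  interpret composite_problem f g A Astar \<mu>
    by (rule composite_problem.intro[OF f_proper f_convex f_lsc g_proper g_lsc mu_pos g_sc A_lin Astar_adj])
  have \<rho>: "\<rho> > 0" and \<kappa>: "\<kappa> > 0" using rho_def kappa_def Df_pos eps_pos R_pos by simp_all
  define LF where "LF = (onorm A)\<^sup>2 / \<rho> + 1 / \<mu>"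
  have LF: "LF > 0" using \<rho> mu_pos by (simp add: LF_def add_nonneg_pos)
  have L: "Lconst (onorm A) \<mu> \<rho> \<kappa> = LF + \<kappa>" by (simp add: Lconst_def LF_def)
  have smoothing_error: "\<rho> * Dconst f = \<epsilon> / 3" and regularization_error: "\<rho> * Dconst f \<le> \<kappa> / 2 * R\<^sup>2"
    using rho_def kappa_def Df_pos R_pos by simp_all
  note approx = theta_approximation[OF \<rho> f_bdd]
  have opt: "real_of_ereal (theta f g Astar pstar) \<le> real_of_ereal (theta f g Astar q)" for q
    using pstar_opt[of q] approx(1)[of q] approx(1)[of pstar] by (metis ereal_less_eq(3))
  have "norm (A (xf \<rho> f Astar (p k)) - xg g (p k))
      \<le> 2 * sqrt (Lconst (onorm A) \<mu> \<rho> \<kappa> * (real_of_ereal (theta f g Astar 0)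
          - real_of_ereal (theta f g Astar pstar) + \<rho> * Dconst f))
        * exp (- (real k / 2) * sqrt (\<kappa> / Lconst (onorm A) \<mu> \<rho> \<kappa>)) + sqrt 2 * \<kappa> * R"
    by (rule fgm_gradient_bound[where G = "\<lambda>q. A (xf \<rho> f Astar q) - xg g q", OF \<kappa> LF L
          theta_reg_first_order_bounds[OF \<rho>, folded LF_def] approx(2,3) opt pstar_R regularization_error
          p0 w0 p_step w_step])
  moreover have "sqrt 2 * \<kappa> * R \<le> 4 * sqrt 2 * \<epsilon> / (3 * R)"
    using kappa_def eps_pos R_pos by (simp add: power2_eq_square field_simps)
  ultimately show "norm (A (xf \<rho> f Astar (p k)) - xg g (p k))
           \<le> 2 * sqrt (Lconst (onorm A) \<mu> \<rho> \<kappa> *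
                   (real_of_ereal (theta f g Astar 0) - real_of_ereal (theta f g Astar pstar) + \<epsilon> / 3))
               * exp (- (real k / 2) * sqrt (\<kappa> / Lconst (onorm A) \<mu> \<rho> \<kappa>))
             + 4 * sqrt 2 * \<epsilon> / (3 * R)"
    unfolding smoothing_error by linarith
qed

end
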